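(* Let $n \geq 1$ be an integer, let $\lambda_0 \geq 0 > \lambda_1 \geq \cdots \geq \lambda_n$ be real numbers and let $z_1, z_2, z_3$ be complex numbers with $z_j = a_j + b_j i$, $a_j \in \mathbb{R}$, $b_j > 0$ for $j = 1, 2, 3$. If $\lambda_0 + \sum_{j=1}^n \lambda_j - 2\sum_{j=1}^3 |z_j| \geq 0$, then there is an $(n+7) \times (n+7)$ normal centrosymmetric nonnegative matrix with eigenvalues $\lambda_0, \lambda_1, \ldots, \lambda_n, z_1, z_2, z_3, \overline{z}_1, \overline{z}_2, \overline{z}_3$.
   Context: $J$ denotes the reverse identity matrix of the appropriate size (ones on the anti-diagonal, zeros elsewhere). A square matrix $Q$ is centrosymmetric if $JQJ = Q$, nonnegative if all entries are nonnegative, and normal if $QQ^* = Q^*Q$. *)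

theory Defs
  imports "Jordan_Normal_Form.Schur_Decomposition"
begin

definition exchange_mat :: "nat \<Rightarrow> 'a :: {zero,one} mat" where
  "exchange_mat n = mat n n (\<lambda>(i, j). if i + j + 1 = n then 1 else 0)"

definition centrosymmetric :: "'a :: comm_ring_1 mat \<Rightarrow> bool" where
  "centrosymmetric Q \<longleftrightarrow> square_mat Q \<and>
     exchange_mat (dim_row Q) * Q * exchange_mat (dim_row Q) = Q"

definition nonneg_mat :: "real mat \<Rightarrow> bool" where
  "nonneg_mat Q \<longleftrightarrow> (\<forall>i < dim_row Q. \<forall>j < dim_col Q. Q $$ (i, j) \<ge> 0)"

definition normal_mat :: "'a :: conjugatable_field mat \<Rightarrow> bool" where
  "normal_mat Q \<longleftrightarrow> square_mat Q \<and> Q * mat_adjoint Q = mat_adjoint Q * Q"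

definition has_eigenvalues :: "real mat \<Rightarrow> complex list \<Rightarrow> bool" where
  "has_eigenvalues Q es \<longleftrightarrow>
     char_poly (map_mat complex_of_real Q) = (\<Prod>a\<leftarrow>es. [:- a, 1:])"

end

theory Submission
  imports Defs
begin

definition outer_mat :: "'a::comm_ring_1 vec \<Rightarrow> 'a vec \<Rightarrow> 'a mat" where
  "outer_mat a b = mat (dim_vec a) (dim_vec b) (\<lambda>(i, j). a $ i * b $ j)"

lemma outer_mat_carrier[simp]: "outer_mat a b \<in> carrier_mat (dim_vec a) (dim_vec b)"
  and outer_mat_dims[simp]: "dim_row (outer_mat a b) = dim_vec a" "dim_col (outer_mat a b) = dim_vec b"
  by (auto simp: outer_mat_def)

lemma outer_mat_carrier_vec[simp]:
  "a \<in> carrier_vec n \<Longrightarrow> b \<in> carrier_vec m \<Longrightarrow> outer_mat a b \<in> carrier_mat n m"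
  by (simp add: outer_mat_def)

lemma index_outer_mat[simp]:
  "i < dim_vec a \<Longrightarrow> j < dim_vec b \<Longrightarrow> outer_mat a b $$ (i, j) = a $ i * b $ j"
  by (simp add: outer_mat_def)

lemma outer_mat_mult_vec: "dim_vec c = dim_vec b \<Longrightarrow> outer_mat a b *\<^sub>v c = (b \<bullet> c) \<cdot>\<^sub>v a"
  by (intro eq_vecI) (auto simp: scalar_prod_def sum_distrib_left ac_simps intro!: sum.cong)

lemma mult_outer_mat: "dim_col A = dim_vec a \<Longrightarrow> A * outer_mat a b = outer_mat (A *\<^sub>v a) b"
  by (intro eq_matI) (auto simp: scalar_prod_def sum_distrib_left ac_simps intro!: sum.cong)

lemma outer_mat_mult: "dim_row A = dim_vec b \<Longrightarrow> outer_mat a b * A = outer_mat a (transpose_mat A *\<^sub>v b)"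
  by (intro eq_matI) (auto simp: scalar_prod_def sum_distrib_left ac_simps intro!: sum.cong)

lemma char_poly_col_zero:
  fixes A :: "'a :: idom mat"
  assumes A: "A \<in> carrier_mat n n" and i: "i < n"
    and zero: "\<And>j. j < n \<Longrightarrow> j \<noteq> i \<Longrightarrow> A $$ (j, i) = 0"
  shows "char_poly A = [:- A $$ (i, i), 1:] * char_poly (mat_delete A i i)"
proof -
  let ?C = "[:0, 1:] \<cdot>\<^sub>m 1\<^sub>m n + map_mat (\<lambda>a. [:- a:]) A"
  define C where "C = ?C"
  let ?f = "\<lambda>j. C $$ (j, i) * cofactor C j i"
  have C: "C \<in> carrier_mat n n" using A unfolding C_def by auto
  have "char_poly A = (\<Sum>j<n. ?f j)"
    unfolding char_poly_def[of A] char_poly_matrix_def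
    using laplace_expansion_column[OF C i] A unfolding C_def by simp
  also have "\<dots> = ?f i + sum ?f ({..<n} - {i})"
    by (rule sum.remove) (use i in auto)
  also have "sum ?f ({..<n} - {i}) = 0"
    by (rule sum.neutral) (use i A zero in \<open>auto simp: C_def\<close>)
  also have "C $$ (i, i) = [:- A $$ (i, i), 1:]"
    using i A by (simp add: C_def)
  also have "cofactor C i i = det (mat_delete ?C i i)"
    by (simp add: cofactor_def C_def)
  also have "mat_delete ?C i i = [:0, 1:] \<cdot>\<^sub>m 1\<^sub>m (dim_row (mat_delete A i i)) + map_mat (\<lambda>a. [:- a:]) (mat_delete A i i)"
    using i A by (auto simp: mat_delete_def)
  finally show ?thesis by (simp add: char_poly_def char_poly_matrix_def)
qed

lemma similar_mat_conj:
  assumes A: "A \<in> carrier_mat n n" and P: "P \<in> carrier_mat n n" and Q: "Q \<in> carrier_mat n n"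
    and PQ: "P * Q = 1\<^sub>m n" and QP: "Q * P = 1\<^sub>m n"
  shows "similar_mat A (Q * A * P)"
proof (rule similar_matI[where P = P and Q = Q])
  have "P * (Q * A * P) * Q = (P * Q) * A * (P * Q)"
    using A P Q by (simp add: assoc_mult_mat[of _ n n _ n _ n])
  also have "\<dots> = A" using A by (simp add: PQ)
  finally show "A = P * (Q * A * P) * Q" by simp
qed (use A P Q PQ QP in auto)

definition shear_mat :: "nat \<Rightarrow> nat \<Rightarrow> 'a :: {zero,one} vec \<Rightarrow> 'a mat" where
  "shear_mat n k p = mat n n (\<lambda>(i, j). if j = k then p $ i else if i = j then 1 else 0)"

lemma shear_mat_carrier[simp]: "shear_mat n k p \<in> carrier_mat n n"
  and shear_mat_dims[simp]: "dim_row (shear_mat n k p) = n" "dim_col (shear_mat n k p) = n"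
  by (simp_all add: shear_mat_def)

lemma col_shear_mat:
  "p \<in> carrier_vec n \<Longrightarrow> j < n \<Longrightarrow> col (shear_mat n k p) j = (if j = k then p else unit_vec n j)"
  by (auto simp: shear_mat_def unit_vec_def)

lemma shear_mat_mult_vec:
  fixes v :: "'a :: comm_ring_1 vec"
  assumes v: "v \<in> carrier_vec n" and k: "k < n"
  shows "shear_mat n k p *\<^sub>v v = vec n (\<lambda>i. p $ i * v $ k + (if i = k then 0 else v $ i))"
proof (rule eq_vecI)
  fix i assume "i < dim_vec (vec n (\<lambda>i. p $ i * v $ k + (if i = k then 0 else v $ i)))"
  then have i: "i < n" by simp
  have "(shear_mat n k p *\<^sub>v v) $ i = (\<Sum>j\<in>{0..<n}. shear_mat n k p $$ (i, j) * v $ j)"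
    using i v by (simp add: scalar_prod_def shear_mat_def)
  also have "\<dots> = (\<Sum>j\<in>{0..<n}. (if j = k then p $ i * v $ k else 0)
                                   + (if j = i then (if i = k then 0 else v $ i) else 0))"
    by (rule sum.cong) (use i in \<open>auto simp: shear_mat_def\<close>)
  finally show "(shear_mat n k p *\<^sub>v v) $ i = vec n (\<lambda>i. p $ i * v $ k + (if i = k then 0 else v $ i)) $ i"
    using i k by (simp add: sum.distrib)
qed (use v in auto)

lemma shear_mat_unit: "shear_mat n k (unit_vec n k) = 1\<^sub>m n"
  by (auto simp: shear_mat_def unit_vec_def)

lemma shear_mat_mult:
  fixes p :: "'a :: comm_ring_1 vec"
  assumes p: "p \<in> carrier_vec n" and q: "q \<in> carrier_vec n" and k: "k < n"
  shows "shear_mat n k p * shear_mat n k q = shear_mat n k (shear_mat n k p *\<^sub>v q)"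
proof (rule eq_matI)
  fix i j assume "i < dim_row (shear_mat n k (shear_mat n k p *\<^sub>v q))"
    "j < dim_col (shear_mat n k (shear_mat n k p *\<^sub>v q))"
  then have i: "i < n" and j: "j < n" by (auto simp: shear_mat_def)
  have "(shear_mat n k p * shear_mat n k q) $$ (i, j) = (shear_mat n k p *\<^sub>v col (shear_mat n k q) j) $ i"
    using i j by (simp add: shear_mat_def)
  also have "\<dots> = shear_mat n k (shear_mat n k p *\<^sub>v q) $$ (i, j)"
    using i j k p q by (auto simp: col_shear_mat shear_mat_mult_vec) (auto simp: shear_mat_def unit_vec_def)
  finally show "(shear_mat n k p * shear_mat n k q) $$ (i, j) = shear_mat n k (shear_mat n k p *\<^sub>v q) $$ (i, j)" .
qed (auto simp: shear_mat_def)

lemma shear_mat_inverse: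
  fixes p :: "'a :: field vec"
  assumes p: "p \<in> carrier_vec n" and k: "k < n" and pk: "p $ k \<noteq> 0"
  defines "p' \<equiv> vec n (\<lambda>i. if i = k then 1 / p $ k else - p $ i / p $ k)"
  shows "shear_mat n k p * shear_mat n k p' = 1\<^sub>m n" "shear_mat n k p' * shear_mat n k p = 1\<^sub>m n"
proof -
  have p': "p' \<in> carrier_vec n" by (simp add: p'_def)
  have "shear_mat n k p *\<^sub>v p' = unit_vec n k" "shear_mat n k p' *\<^sub>v p = unit_vec n k"
    using p p' k pk by (auto simp: shear_mat_mult_vec p'_def unit_vec_def intro!: eq_vecI)
  then show "shear_mat n k p * shear_mat n k p' = 1\<^sub>m n" "shear_mat n k p' * shear_mat n k p = 1\<^sub>m n"
    using shear_mat_mult[OF p p' k] shear_mat_mult[OF p' p k] by (simp_all add: shear_mat_unit)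
qed

lemma char_poly_deflate:
  fixes M :: "'a :: field mat"
  assumes M: "M \<in> carrier_mat n n" and S: "S \<in> carrier_mat n n" and S': "S' \<in> carrier_mat n n"
    and inv: "S * S' = 1\<^sub>m n" "S' * S = 1\<^sub>m n" and k: "k < n"
    and ev: "M *\<^sub>v col S k = c \<cdot>\<^sub>v col S k"
  shows "char_poly M = [:- c, 1:] * char_poly (mat_delete (S' * M * S) k k)"
proof -
  let ?T = "S' * M * S"
  have T: "?T \<in> carrier_mat n n" using M S S' by auto
  have MS: "M * S \<in> carrier_mat n n" using M S by simp
  have "col ?T k = col (S' * (M * S)) k"
    using M S S' by (simp add: assoc_mult_mat[of _ n n _ n _ n])
  also have "\<dots> = S' *\<^sub>v (M *\<^sub>v col S k)"
    using col_mult2[OF S' MS k] col_mult2[OF M S k] by simp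
  also have "\<dots> = c \<cdot>\<^sub>v (S' *\<^sub>v col S k)"
    using S S' k by (simp add: ev mult_mat_vec)
  also have "S' *\<^sub>v col S k = unit_vec n k"
    using col_mult2[OF S' S k] k by (simp add: inv)
  finally have col: "col ?T k = c \<cdot>\<^sub>v unit_vec n k" .
  have colT: "?T $$ (j, k) = (if j = k then c else 0)" if "j < n" for j
  proof -
    have "?T $$ (j, k) = col ?T k $ j" using M S S' k that by simp
    then show ?thesis using that by (simp add: col unit_vec_def)
  qed
  have "char_poly M = char_poly ?T"
    by (rule char_poly_similar[OF similar_mat_conj[OF M S S' inv]])
  also have "\<dots> = [:- ?T $$ (k, k), 1:] * char_poly (mat_delete ?T k k)"
    by (rule char_poly_col_zero[OF T k]) (simp add: colT)
  finally show ?thesis using k by (simp add: colT)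
qed

lemma mat_delete_add_outer_unit:
  assumes "A \<in> carrier_mat n n" "w \<in> carrier_vec n" "k < n"
  shows "mat_delete (A + outer_mat (unit_vec n k) w) k k = mat_delete A k k"
  using assms by (intro eq_matI) (auto simp: mat_delete_def insert_index_def)

text \<open>Brauer's theorem. Conjugating by the shear matrix with column k equal to p turns p into
  the unit vector e_k; the update then only changes row k, which mat_delete discards.\<close>

lemma brauer_char_poly:
  fixes M :: "'a :: field mat"
  assumes M: "M \<in> carrier_mat n n" and p: "p \<in> carrier_vec n" and y: "y \<in> carrier_vec n"
    and ev: "M *\<^sub>v p = lam \<cdot>\<^sub>v p" and p0: "p \<noteq> 0\<^sub>v n"
  shows "char_poly (M + outer_mat p y) * [:- lam, 1:] = char_poly M * [:- (lam + y \<bullet> p), 1:]"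
proof -
  obtain k where k: "k < n" and pk: "p $ k \<noteq> 0" using p p0 by (auto simp: vec_eq_iff)
  define p' where "p' = vec n (\<lambda>i. if i = k then 1 / p $ k else - p $ i / p $ k)"
  define S where "S = shear_mat n k p"
  define S' where "S' = shear_mat n k p'"
  have S: "S \<in> carrier_mat n n" and S': "S' \<in> carrier_mat n n" by (simp_all add: S_def S'_def)
  have inv: "S * S' = 1\<^sub>m n" "S' * S = 1\<^sub>m n"
    using shear_mat_inverse[OF p k pk] by (simp_all add: S_def S'_def p'_def)
  have colS: "col S k = p" using p k by (simp add: S_def col_shear_mat)
  have S'p: "S' *\<^sub>v p = unit_vec n k"
    using col_mult2[OF S' S k] inv(2) colS k by simp
  have O: "outer_mat p y \<in> carrier_mat n n" using p y by auto
  have M': "M + outer_mat p y \<in> carrier_mat n n" using M O by simp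
  have ev': "(M + outer_mat p y) *\<^sub>v p = (lam + y \<bullet> p) \<cdot>\<^sub>v p"
    using M p y by (simp add: add_mult_distrib_mat_vec[OF M O p] outer_mat_mult_vec ev add_smult_distrib_vec)
  have "S' * (M + outer_mat p y) * S = (S' * M + S' * outer_mat p y) * S"
    by (simp add: mult_add_distrib_mat[OF S' M O])
  also have "\<dots> = S' * M * S + S' * outer_mat p y * S"
    by (rule add_mult_distrib_mat) (use S' M O S in auto)
  also have "S' * outer_mat p y * S = outer_mat (unit_vec n k) (transpose_mat S *\<^sub>v y)"
    using S S' p y by (simp add: mult_outer_mat outer_mat_mult S'p)
  finally have "S' * (M + outer_mat p y) * S = S' * M * S + outer_mat (unit_vec n k) (transpose_mat S *\<^sub>v y)" .
  then have del: "mat_delete (S' * (M + outer_mat p y) * S) k k = mat_delete (S' * M * S) k k"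
    using M S S' y k by (simp add: mat_delete_add_outer_unit)
  have "char_poly (M + outer_mat p y) = [:- (lam + y \<bullet> p), 1:] * char_poly (mat_delete (S' * M * S) k k)"
    using char_poly_deflate[OF M' S S' inv k, unfolded colS, OF ev'] by (simp only: del)
  moreover have "char_poly M = [:- lam, 1:] * char_poly (mat_delete (S' * M * S) k k)"
    using char_poly_deflate[OF M S S' inv k, unfolded colS, OF ev] .
  ultimately show ?thesis by (simp only: ac_simps)
qed

definition sym_update :: "'a::comm_ring_1 mat \<Rightarrow> 'a \<Rightarrow> 'a vec \<Rightarrow> 'a vec \<Rightarrow> 'a mat" where
  "sym_update M \<rho> p q = M + \<rho> \<cdot>\<^sub>m (outer_mat p q + outer_mat q p)"

lemma sym_update_carrier[simp]:
  "M \<in> carrier_mat n n \<Longrightarrow> p \<in> carrier_vec n \<Longrightarrow> q \<in> carrier_vec n \<Longrightarrow> sym_update M \<rho> p q \<in> carrier_mat n n"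
  by (simp add: sym_update_def)

lemma index_sym_update:
  "M \<in> carrier_mat n n \<Longrightarrow> p \<in> carrier_vec n \<Longrightarrow> q \<in> carrier_vec n \<Longrightarrow> i < n \<Longrightarrow> j < n \<Longrightarrow>
   sym_update M \<rho> p q $$ (i, j) = M $$ (i, j) + \<rho> * (p $ i * q $ j + q $ i * p $ j)"
  by (simp add: sym_update_def)

lemma smult_mat_mult_vec: "dim_vec v = dim_col A \<Longrightarrow> (k \<cdot>\<^sub>m A) *\<^sub>v v = k \<cdot>\<^sub>v (A *\<^sub>v v)"
  by (intro eq_vecI) (auto simp: scalar_prod_def sum_distrib_left ac_simps intro!: sum.cong)

lemma transpose_sym_update:
  "M \<in> carrier_mat n n \<Longrightarrow> p \<in> carrier_vec n \<Longrightarrow> q \<in> carrier_vec n \<Longrightarrow>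
   transpose_mat (sym_update M \<rho> p q) = sym_update (transpose_mat M) \<rho> p q"
  by (intro eq_matI) (auto simp: sym_update_def ac_simps)

text \<open>For eigenvectors p \<bottom> q of M with eigenvalues \<alpha>, \<beta>, the update acts on span {p, q}
  like the symmetric matrix with diagonal \<alpha>, \<beta> and off-diagonal \<rho> |p| |q|; its eigenvalue
  \<theta> has the eigenvector below.\<close>

lemma sym_update_eigenvector:
  fixes M :: "'a::field mat"
  assumes M: "M \<in> carrier_mat n n" and p: "p \<in> carrier_vec n" and q: "q \<in> carrier_vec n"
    and evp: "M *\<^sub>v p = \<alpha> \<cdot>\<^sub>v p" and evq: "M *\<^sub>v q = \<beta> \<cdot>\<^sub>v q" and pq: "p \<bullet> q = 0"
    and K: "(\<theta> - \<alpha>) * (\<theta> - \<beta>) = \<rho>\<^sup>2 * (p \<bullet> p) * (q \<bullet> q)"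
  defines "w \<equiv> (\<rho> * (q \<bullet> q)) \<cdot>\<^sub>v p + (\<theta> - \<alpha>) \<cdot>\<^sub>v q"
  shows "sym_update M \<rho> p q *\<^sub>v w = \<theta> \<cdot>\<^sub>v w"
proof -
  have qp: "q \<bullet> p = 0" using pq comm_scalar_prod[OF p q] by simp
  have w: "w \<in> carrier_vec n" unfolding w_def using p q by auto
  have O: "outer_mat p q + outer_mat q p \<in> carrier_mat n n" using p q by auto
  have "sym_update M \<rho> p q *\<^sub>v w = M *\<^sub>v w + \<rho> \<cdot>\<^sub>v ((q \<bullet> w) \<cdot>\<^sub>v p + (p \<bullet> w) \<cdot>\<^sub>v q)"
    using M O p q w
    by (simp add: sym_update_def add_mult_distrib_mat_vec[of _ n n] smult_mat_mult_vec outer_mat_mult_vec)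
  also have "M *\<^sub>v w = (\<rho> * (q \<bullet> q) * \<alpha>) \<cdot>\<^sub>v p + ((\<theta> - \<alpha>) * \<beta>) \<cdot>\<^sub>v q"
    using M p q by (simp add: w_def mult_add_distrib_mat_vec[OF M] mult_mat_vec evp evq smult_smult_assoc)
  also have "q \<bullet> w = (\<theta> - \<alpha>) * (q \<bullet> q)"
    using p q by (simp add: w_def scalar_prod_add_distrib[of _ n] qp)
  also have "p \<bullet> w = \<rho> * (q \<bullet> q) * (p \<bullet> p)"
    using p q by (simp add: w_def scalar_prod_add_distrib[of _ n] pq)
  finally have "sym_update M \<rho> p q *\<^sub>v w
      = (\<rho> * (q \<bullet> q) * \<alpha> + \<rho> * ((\<theta> - \<alpha>) * (q \<bullet> q))) \<cdot>\<^sub>v p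
        + ((\<theta> - \<alpha>) * \<beta> + \<rho> * (\<rho> * (q \<bullet> q) * (p \<bullet> p))) \<cdot>\<^sub>v q"
    using p q by (intro eq_vecI) (auto simp: algebra_simps)
  also have "\<rho> * (q \<bullet> q) * \<alpha> + \<rho> * ((\<theta> - \<alpha>) * (q \<bullet> q)) = \<theta> * (\<rho> * (q \<bullet> q))"
    by (simp add: algebra_simps)
  also have "(\<theta> - \<alpha>) * \<beta> + \<rho> * (\<rho> * (q \<bullet> q) * (p \<bullet> p)) = (\<theta> - \<alpha>) * \<beta> + (\<theta> - \<alpha>) * (\<theta> - \<beta>)"
    by (simp add: K power2_eq_square ac_simps)
  also have "\<dots> = \<theta> * (\<theta> - \<alpha>)"
    by (simp add: algebra_simps)
  finally show ?thesis
    using p q by (intro eq_vecI) (auto simp: w_def algebra_simps)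
qed

lemma sym_update_normal:
  fixes M :: "'a::comm_ring_1 mat"
  assumes M: "M \<in> carrier_mat n n" and p: "p \<in> carrier_vec n" and q: "q \<in> carrier_vec n"
    and evp: "M *\<^sub>v p = transpose_mat M *\<^sub>v p" and evq: "M *\<^sub>v q = transpose_mat M *\<^sub>v q"
    and normal: "M * transpose_mat M = transpose_mat M * M"
  shows "sym_update M \<rho> p q * transpose_mat (sym_update M \<rho> p q)
       = transpose_mat (sym_update M \<rho> p q) * sym_update M \<rho> p q"
proof -
  define U where "U = \<rho> \<cdot>\<^sub>m (outer_mat p q + outer_mat q p)"
  have Opq: "outer_mat p q \<in> carrier_mat n n" and Oqp: "outer_mat q p \<in> carrier_mat n n"
    using p q by simp_all
  have O: "outer_mat p q + outer_mat q p \<in> carrier_mat n n" using p q by simp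
  then have U: "U \<in> carrier_mat n n" by (simp add: U_def)
  have MT: "transpose_mat M \<in> carrier_mat n n" using M by simp
  have left: "M * U = transpose_mat M * U"
    using M MT p q by (simp add: U_def mult_smult_distrib[OF M O] mult_smult_distrib[OF MT O]
        mult_add_distrib_mat[OF M Opq Oqp] mult_add_distrib_mat[OF MT Opq Oqp] mult_outer_mat evp evq)
  have right: "U * transpose_mat M = U * M"
    using M MT p q by (simp add: U_def mult_smult_assoc_mat[OF O M] mult_smult_assoc_mat[OF O MT]
        add_mult_distrib_mat[OF Opq Oqp M] add_mult_distrib_mat[OF Opq Oqp MT] outer_mat_mult evp evq)
  have UT: "transpose_mat U = U"
    using p q by (auto simp: U_def ac_simps intro!: eq_matI)
  have "(M + U) * transpose_mat (M + U) = M * transpose_mat M + (U * transpose_mat M + (M * U + U * U))"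
    using M U MT by (simp add: transpose_add[OF M U] UT mult_add_distrib_mat[of _ n n] add_mult_distrib_mat[of _ n n] assoc_add_mat[of _ n n])
  also have "\<dots> = transpose_mat M * M + (U * M + (transpose_mat M * U + U * U))"
    by (simp add: normal left right)
  also have "\<dots> = transpose_mat (M + U) * (M + U)"
    using M U MT by (simp add: transpose_add[OF M U] UT mult_add_distrib_mat[of _ n n] add_mult_distrib_mat[of _ n n] assoc_add_mat[of _ n n])
  finally show ?thesis by (simp add: sym_update_def U_def)
qed

lemma sym_update_eq_add_outer_mat:
  fixes M :: "'a::field mat"
  assumes "M \<in> carrier_mat n n" "p \<in> carrier_vec n" "q \<in> carrier_vec n" "q \<bullet> q \<noteq> 0"
  shows "sym_update M \<rho> p q = M + outer_mat q (\<rho> \<cdot>\<^sub>v p + (- s / (q \<bullet> q)) \<cdot>\<^sub>v q)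
      + outer_mat ((\<rho> * (q \<bullet> q)) \<cdot>\<^sub>v p + s \<cdot>\<^sub>v q) ((1 / (q \<bullet> q)) \<cdot>\<^sub>v q)"
  using assms by (intro eq_matI) (auto simp: sym_update_def field_simps)

lemma add_outer_mat_eigenvector:
  fixes M :: "'a::field mat"
  assumes M: "M \<in> carrier_mat n n" and p: "p \<in> carrier_vec n" and q: "q \<in> carrier_vec n"
    and evp: "M *\<^sub>v p = \<alpha> \<cdot>\<^sub>v p" and evq: "M *\<^sub>v q = \<beta> \<cdot>\<^sub>v q"
    and pq: "p \<bullet> q = 0" and qq: "q \<bullet> q \<noteq> 0"
    and K: "(\<theta> - \<alpha>) * (\<theta> - \<beta>) = \<rho>\<^sup>2 * (p \<bullet> p) * (q \<bullet> q)"
  defines "z \<equiv> \<rho> \<cdot>\<^sub>v p + (- (\<theta> - \<alpha>) / (q \<bullet> q)) \<cdot>\<^sub>v q"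
    and "w \<equiv> (\<rho> * (q \<bullet> q)) \<cdot>\<^sub>v p + (\<theta> - \<alpha>) \<cdot>\<^sub>v q"
  shows "(M + outer_mat q z) *\<^sub>v w = \<alpha> \<cdot>\<^sub>v w"
proof -
  have qp: "q \<bullet> p = 0" using pq comm_scalar_prod[OF p q] by simp
  have z: "z \<in> carrier_vec n" and w: "w \<in> carrier_vec n" using p q by (simp_all add: z_def w_def)
  have "z \<bullet> w = \<rho>\<^sup>2 * (p \<bullet> p) * (q \<bullet> q) - (\<theta> - \<alpha>) * (\<theta> - \<alpha>)"
    using p q qq by (simp add: z_def w_def add_scalar_prod_distrib[of _ n]
        scalar_prod_add_distrib[of _ n] pq qp field_simps power2_eq_square)
  also have "\<dots> = (\<theta> - \<alpha>) * (\<alpha> - \<beta>)"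
    unfolding K[symmetric] by (simp add: algebra_simps)
  finally have zw: "z \<bullet> w = (\<theta> - \<alpha>) * (\<alpha> - \<beta>)" .
  have "(M + outer_mat q z) *\<^sub>v w = M *\<^sub>v w + (z \<bullet> w) \<cdot>\<^sub>v q"
    using M q z w by (simp add: add_mult_distrib_mat_vec[of _ n n] outer_mat_mult_vec)
  also have "M *\<^sub>v w = (\<rho> * (q \<bullet> q) * \<alpha>) \<cdot>\<^sub>v p + ((\<theta> - \<alpha>) * \<beta>) \<cdot>\<^sub>v q"
    using M p q by (simp add: w_def mult_add_distrib_mat_vec[OF M] mult_mat_vec evp evq smult_smult_assoc)
  also note zw
  finally show ?thesis
    using p q unfolding w_def by (intro eq_vecI) (auto simp: algebra_simps)
qed

text \<open>The update splits into two rank-one updates, each handled by Brauer's theorem: first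
  along q, then along the eigenvector w of the intermediate matrix.\<close>

lemma char_poly_sym_update:
  fixes M :: "'a::field mat"
  assumes M: "M \<in> carrier_mat n n" and p: "p \<in> carrier_vec n" and q: "q \<in> carrier_vec n"
    and evp: "M *\<^sub>v p = \<alpha> \<cdot>\<^sub>v p" and evq: "M *\<^sub>v q = \<beta> \<cdot>\<^sub>v q"
    and pq: "p \<bullet> q = 0" and qq: "q \<bullet> q \<noteq> 0" and \<theta>: "\<theta> \<noteq> \<alpha>"
    and K: "(\<theta> - \<alpha>) * (\<theta> - \<beta>) = \<rho>\<^sup>2 * (p \<bullet> p) * (q \<bullet> q)"
  shows "char_poly (sym_update M \<rho> p q) * [:- \<alpha>, 1:] * [:- \<beta>, 1:]
       = char_poly M * [:- \<theta>, 1:] * [:- (\<alpha> + \<beta> - \<theta>), 1:]"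
proof -
  define z where "z = \<rho> \<cdot>\<^sub>v p + (- (\<theta> - \<alpha>) / (q \<bullet> q)) \<cdot>\<^sub>v q"
  define w where "w = (\<rho> * (q \<bullet> q)) \<cdot>\<^sub>v p + (\<theta> - \<alpha>) \<cdot>\<^sub>v q"
  define y where "y = (1 / (q \<bullet> q)) \<cdot>\<^sub>v q"
  define M' where "M' = M + outer_mat q z"
  have z: "z \<in> carrier_vec n" and w: "w \<in> carrier_vec n" and y: "y \<in> carrier_vec n"
    using p q by (simp_all add: z_def w_def y_def)
  have M': "M' \<in> carrier_mat n n" using M q z by (simp add: M'_def)
  have evw: "M' *\<^sub>v w = \<alpha> \<cdot>\<^sub>v w"
    unfolding M'_def z_def w_def by (rule add_outer_mat_eigenvector[OF M p q evp evq pq qq K])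
  have q0: "q \<noteq> 0\<^sub>v n" using qq q by auto
  have "w \<bullet> q = (\<theta> - \<alpha>) * (q \<bullet> q)"
    using p q by (simp add: w_def add_scalar_prod_distrib[of _ n] pq)
  then have w0: "w \<noteq> 0\<^sub>v n" using q qq \<theta> by auto
  have "\<alpha> + \<beta> - \<theta> = \<beta> + z \<bullet> q" "\<theta> = \<alpha> + y \<bullet> w"
    using p q qq by (simp_all add: z_def y_def w_def add_scalar_prod_distrib[of _ n]
        scalar_prod_add_distrib[of _ n] pq comm_scalar_prod[OF q p])
  then have step1: "char_poly M' * [:- \<beta>, 1:] = char_poly M * [:- (\<alpha> + \<beta> - \<theta>), 1:]"
    and step2: "char_poly (M' + outer_mat w y) * [:- \<alpha>, 1:] = char_poly M' * [:- \<theta>, 1:]"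
    unfolding M'_def by (simp_all only: brauer_char_poly[OF M q z evq q0]
        brauer_char_poly[OF M' w y evw w0, unfolded M'_def])
  have update: "sym_update M \<rho> p q = M' + outer_mat w y"
    unfolding M'_def z_def w_def y_def by (rule sym_update_eq_add_outer_mat[OF M p q qq])
  have "char_poly (sym_update M \<rho> p q) * [:- \<alpha>, 1:] * [:- \<beta>, 1:]
      = char_poly M' * [:- \<beta>, 1:] * [:- \<theta>, 1:]"
    by (simp only: update step2 mult.assoc mult.commute mult.left_commute)
  then show ?thesis
    by (simp only: step1 mult.assoc mult.commute mult.left_commute)
qed

definition permute_mat :: "(nat \<Rightarrow> nat) \<Rightarrow> 'a mat \<Rightarrow> 'a mat" where
  "permute_mat f A = mat (dim_row A) (dim_col A) (\<lambda>(i, j). A $$ (f i, f j))"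

definition permute_vec :: "(nat \<Rightarrow> nat) \<Rightarrow> 'a vec \<Rightarrow> 'a vec" where
  "permute_vec f v = vec (dim_vec v) (\<lambda>i. v $ f i)"

lemma permute_mat_carrier[simp]: "permute_mat f A \<in> carrier_mat (dim_row A) (dim_col A)"
  and permute_mat_dims[simp]: "dim_row (permute_mat f A) = dim_row A" "dim_col (permute_mat f A) = dim_col A"
  by (auto simp: permute_mat_def)

lemma index_permute_mat[simp]:
  "i < dim_row A \<Longrightarrow> j < dim_col A \<Longrightarrow> permute_mat f A $$ (i, j) = A $$ (f i, f j)"
  by (simp add: permute_mat_def)

lemma permute_vec_dim[simp]: "dim_vec (permute_vec f v) = dim_vec v"
  by (simp add: permute_vec_def)

lemma permute_vec_carrier[simp]: "v \<in> carrier_vec n \<Longrightarrow> permute_vec f v \<in> carrier_vec n"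
  by (simp add: permute_vec_def carrier_vecD)

lemma index_permute_vec[simp]: "i < dim_vec v \<Longrightarrow> permute_vec f v $ i = v $ f i"
  by (simp add: permute_vec_def)

locale index_perm =
  fixes n :: nat and f :: "nat \<Rightarrow> nat"
  assumes bij: "bij_betw f {..<n} {..<n}"
begin

lemma perm_less: "i < n \<Longrightarrow> f i < n"
  using bij by (auto simp: bij_betw_def)

lemma sum_reindex: "(\<Sum>k\<in>{0..<n}. g (f k)) = (\<Sum>k\<in>{0..<n}. g k)"
  using sum.reindex_bij_betw[OF bij, of g] by (simp add: atLeast0LessThan)

lemma permute_mat_mult:
  assumes A: "A \<in> carrier_mat n n" and B: "B \<in> carrier_mat n n"
  shows "permute_mat f A * permute_mat f B = permute_mat f (A * B)"
proof (rule eq_matI)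
  fix i j assume "i < dim_row (permute_mat f (A * B))" "j < dim_col (permute_mat f (A * B))"
  then have i: "i < n" and j: "j < n" using A B by auto
  have "(permute_mat f A * permute_mat f B) $$ (i, j) = (\<Sum>k\<in>{0..<n}. A $$ (f i, f k) * B $$ (f k, f j))"
    using A B i j by (auto simp: scalar_prod_def perm_less intro!: sum.cong)
  also have "\<dots> = (\<Sum>k\<in>{0..<n}. A $$ (f i, k) * B $$ (k, f j))"
    by (rule sum_reindex)
  also have "\<dots> = permute_mat f (A * B) $$ (i, j)"
    using A B i j by (auto simp: scalar_prod_def perm_less)
  finally show "(permute_mat f A * permute_mat f B) $$ (i, j) = permute_mat f (A * B) $$ (i, j)" .
qed (use A B in auto)

lemma permute_mat_mult_vec:
  assumes A: "A \<in> carrier_mat n n" and v: "v \<in> carrier_vec n"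
  shows "permute_mat f A *\<^sub>v permute_vec f v = permute_vec f (A *\<^sub>v v)"
proof (rule eq_vecI)
  fix i assume "i < dim_vec (permute_vec f (A *\<^sub>v v))"
  then have i: "i < n" using A by auto
  have "(permute_mat f A *\<^sub>v permute_vec f v) $ i = (\<Sum>k\<in>{0..<n}. A $$ (f i, f k) * v $ f k)"
    using A v i by (auto simp: scalar_prod_def perm_less intro!: sum.cong)
  also have "\<dots> = (\<Sum>k\<in>{0..<n}. A $$ (f i, k) * v $ k)"
    by (rule sum_reindex)
  also have "\<dots> = permute_vec f (A *\<^sub>v v) $ i"
    using A v i by (auto simp: scalar_prod_def perm_less)
  finally show "(permute_mat f A *\<^sub>v permute_vec f v) $ i = permute_vec f (A *\<^sub>v v) $ i" .
qed (use A v in auto)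

lemma permute_vec_smult: "v \<in> carrier_vec n \<Longrightarrow> permute_vec f (k \<cdot>\<^sub>v v) = k \<cdot>\<^sub>v permute_vec f v"
  by (intro eq_vecI) (auto simp: perm_less)

lemma transpose_permute_mat:
  "A \<in> carrier_mat n n \<Longrightarrow> transpose_mat (permute_mat f A) = permute_mat f (transpose_mat A)"
  by (intro eq_matI) (auto simp: perm_less)

lemma permute_mat_normal:
  assumes "A \<in> carrier_mat n n" and "A * transpose_mat A = transpose_mat A * A"
  shows "permute_mat f A * transpose_mat (permute_mat f A) = transpose_mat (permute_mat f A) * permute_mat f A"
  using assms by (simp add: transpose_permute_mat permute_mat_mult)

lemma similar_permute_mat:
  fixes A :: "'a :: field mat"
  assumes A: "A \<in> carrier_mat n n"
  shows "similar_mat A (permute_mat f A)"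
proof -
  define P :: "'a mat" where "P = mat n n (\<lambda>(i, j). if i = f j then 1 else 0)"
  have P: "P \<in> carrier_mat n n" and PT: "transpose_mat P \<in> carrier_mat n n" by (auto simp: P_def)
  have Pij: "P $$ (i, j) = (if i = f j then 1 else 0)" if "i < n" "j < n" for i j
    using that by (simp add: P_def)
  have inj: "i < n \<Longrightarrow> j < n \<Longrightarrow> f i = f j \<longleftrightarrow> i = j" for i j
    using bij by (auto simp: bij_betw_def inj_on_def)
  have PTP: "transpose_mat P * P = 1\<^sub>m n"
  proof (rule eq_matI)
    fix i j assume "i < dim_row (1\<^sub>m n :: 'a mat)" "j < dim_col (1\<^sub>m n :: 'a mat)"
    then have i: "i < n" and j: "j < n" by auto
    have "(transpose_mat P * P) $$ (i, j) = (\<Sum>l\<in>{0..<n}. P $$ (l, i) * P $$ (l, j))"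
      using i j by (simp add: P_def scalar_prod_def)
    also have "\<dots> = (\<Sum>l\<in>{0..<n}. if l = f i then (if i = j then 1 else 0) else 0)"
      by (rule sum.cong) (use i j inj in \<open>auto simp: Pij\<close>)
    finally have "(transpose_mat P * P) $$ (i, j) = (\<Sum>l\<in>{0..<n}. if l = f i then (if i = j then 1 else 0) else 0)" .
    then show "(transpose_mat P * P) $$ (i, j) = 1\<^sub>m n $$ (i, j)" using i j perm_less[OF i] by simp
  qed (use P in auto)
  have PPT: "P * transpose_mat P = 1\<^sub>m n"
    using mat_mult_left_right_inverse[OF PT P PTP] .
  have "transpose_mat P * A * P = permute_mat f A"
  proof (rule eq_matI)
    fix i j assume "i < dim_row (permute_mat f A)" "j < dim_col (permute_mat f A)"
    then have i: "i < n" and j: "j < n" using A by auto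
    have AP: "(A * P) $$ (k, j) = A $$ (k, f j)" if "k < n" for k
    proof -
      have "(A * P) $$ (k, j) = (\<Sum>l\<in>{0..<n}. A $$ (k, l) * P $$ (l, j))"
        using A P j that by (simp add: scalar_prod_def)
      also have "\<dots> = (\<Sum>l\<in>{0..<n}. if l = f j then A $$ (k, f j) else 0)"
        by (rule sum.cong) (use j in \<open>auto simp: Pij\<close>)
      finally show ?thesis using perm_less[OF j] by simp
    qed
    have "(transpose_mat P * A * P) $$ (i, j) = (transpose_mat P * (A * P)) $$ (i, j)"
      using A P by (simp add: assoc_mult_mat[of _ n n _ n _ n])
    also have "\<dots> = (\<Sum>l\<in>{0..<n}. P $$ (l, i) * (A * P) $$ (l, j))"
      using A P i j by (simp add: scalar_prod_def)
    also have "\<dots> = (\<Sum>l\<in>{0..<n}. if l = f i then A $$ (f i, f j) else 0)"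
      by (rule sum.cong) (use i j perm_less[OF i] in \<open>auto simp: Pij AP\<close>)
    finally show "(transpose_mat P * A * P) $$ (i, j) = permute_mat f A $$ (i, j)"
      using i j A perm_less[OF i] by simp
  qed (use A P in auto)
  then show ?thesis using similar_mat_conj[OF A P PT PPT PTP] by simp
qed

end

lemma exchange_mat_carrier[simp]: "exchange_mat n \<in> carrier_mat n n"
  and exchange_mat_dims[simp]: "dim_row (exchange_mat n) = n" "dim_col (exchange_mat n) = n"
  by (simp_all add: exchange_mat_def)

lemma index_exchange_mat[simp]:
  "i < n \<Longrightarrow> j < n \<Longrightarrow> exchange_mat n $$ (i, j) = (if i + j + 1 = n then 1 else 0)"
  by (simp add: exchange_mat_def)

lemma exchange_mat_conj:
  fixes Q :: "'a :: comm_ring_1 mat"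
  assumes Q: "Q \<in> carrier_mat n n"
  shows "exchange_mat n * Q * exchange_mat n = mat n n (\<lambda>(i, j). Q $$ (n - 1 - i, n - 1 - j))"
proof (rule eq_matI)
  fix i j assume "i < dim_row (mat n n (\<lambda>(i, j). Q $$ (n - 1 - i, n - 1 - j)))"
    "j < dim_col (mat n n (\<lambda>(i, j). Q $$ (n - 1 - i, n - 1 - j)))"
  then have i: "i < n" and j: "j < n" by auto
  have JQ: "(exchange_mat n * Q) $$ (i, k) = Q $$ (n - 1 - i, k)" if "k < n" for k
  proof -
    have "(exchange_mat n * Q) $$ (i, k) = (\<Sum>l\<in>{0..<n}. exchange_mat n $$ (i, l) * Q $$ (l, k))"
      using Q i that by (simp add: scalar_prod_def)
    also have "\<dots> = (\<Sum>l\<in>{0..<n}. if l = n - 1 - i then Q $$ (n - 1 - i, k) else 0)"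
      by (rule sum.cong) (use i in auto)
    finally have "(exchange_mat n * Q) $$ (i, k) = (\<Sum>l\<in>{0..<n}. if l = n - 1 - i then Q $$ (n - 1 - i, k) else 0)" .
    then show ?thesis using i by simp
  qed
  have "(exchange_mat n * Q * exchange_mat n) $$ (i, j)
      = (\<Sum>l\<in>{0..<n}. (exchange_mat n * Q) $$ (i, l) * exchange_mat n $$ (l, j))"
    using Q i j by (simp add: scalar_prod_def)
  also have "\<dots> = (\<Sum>l\<in>{0..<n}. if l = n - 1 - j then Q $$ (n - 1 - i, n - 1 - j) else 0)"
    by (rule sum.cong) (use j in \<open>auto simp: JQ\<close>)
  finally have "(exchange_mat n * Q * exchange_mat n) $$ (i, j)
      = (\<Sum>l\<in>{0..<n}. if l = n - 1 - j then Q $$ (n - 1 - i, n - 1 - j) else 0)" .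
  then show "(exchange_mat n * Q * exchange_mat n) $$ (i, j) = mat n n (\<lambda>(i, j). Q $$ (n - 1 - i, n - 1 - j)) $$ (i, j)"
    using i j by simp
qed (use Q in auto)

lemma centrosymmetric_iff:
  fixes Q :: "'a :: comm_ring_1 mat"
  assumes Q: "Q \<in> carrier_mat n n"
  shows "centrosymmetric Q \<longleftrightarrow> (\<forall>i<n. \<forall>j<n. Q $$ (n - 1 - i, n - 1 - j) = Q $$ (i, j))"
  using Q exchange_mat_conj[OF Q] by (auto simp: centrosymmetric_def mat_eq_iff)

lemma normal_mat_real_iff:
  fixes A :: "real mat"
  assumes "A \<in> carrier_mat n n"
  shows "normal_mat A \<longleftrightarrow> A * transpose_mat A = transpose_mat A * A"
proof -
  have "mat_adjoint A = transpose_mat A"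
    by (intro eq_matI) (auto simp: mat_adjoint_def mat_of_rows_def)
  then show ?thesis using assms by (auto simp: normal_mat_def)
qed

lemma has_eigenvalues_mset:
  assumes "mset es = mset es'"
  shows "has_eigenvalues Q es \<longleftrightarrow> has_eigenvalues Q es'"
proof -
  have "(\<Prod>a\<leftarrow>es. [:- a, 1:]) = (\<Prod>a\<leftarrow>es'. [:- a, 1:])"
    by (metis assms mset_map prod_mset_prod_list)
  then show ?thesis by (simp add: has_eigenvalues_def)
qed

text \<open>The matrices built below are nonnegative, centrosymmetric and normal, and carry a
  nonnegative centrosymmetric vector u that is an eigenvector of both A and its transpose for the
  eigenvalue \<alpha>; such a vector is what allows two of them to be glued together.\<close>

definition ncs_perron_pair :: "real mat \<Rightarrow> nat \<Rightarrow> real \<Rightarrow> real vec \<Rightarrow> bool" where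
  "ncs_perron_pair A m \<alpha> u \<longleftrightarrow> A \<in> carrier_mat m m \<and> u \<in> carrier_vec m \<and>
    (\<forall>i<m. \<forall>j<m. A $$ (i, j) \<ge> 0) \<and> (\<forall>i<m. u $ i \<ge> 0) \<and> (\<exists>i<m. u $ i > 0) \<and>
    (\<forall>i<m. \<forall>j<m. A $$ (m - 1 - i, m - 1 - j) = A $$ (i, j)) \<and> (\<forall>i<m. u $ (m - 1 - i) = u $ i) \<and>
    A *\<^sub>v u = \<alpha> \<cdot>\<^sub>v u \<and> transpose_mat A *\<^sub>v u = \<alpha> \<cdot>\<^sub>v u \<and> A * transpose_mat A = transpose_mat A * A"

lemma ncs_perron_pairD:
  assumes "ncs_perron_pair Q n \<alpha> u"
  shows "Q \<in> carrier_mat n n \<and> normal_mat Q \<and> centrosymmetric Q \<and> nonneg_mat Q"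
proof -
  have Q: "Q \<in> carrier_mat n n" using assms by (simp add: ncs_perron_pair_def)
  then show ?thesis
    using assms by (auto simp: ncs_perron_pair_def normal_mat_real_iff centrosymmetric_iff nonneg_mat_def)
qed

lemma ncs_perron_pair_self_scalar_pos:
  assumes "ncs_perron_pair A m \<alpha> u"
  shows "u \<bullet> u > 0"
proof -
  obtain k where k: "k < m" "u $ k > 0" using assms by (auto simp: ncs_perron_pair_def)
  have u: "u \<in> carrier_vec m" using assms by (simp add: ncs_perron_pair_def)
  have "u $ k * u $ k \<le> (\<Sum>i\<in>{0..<m}. u $ i * u $ i)"
    by (rule member_le_sum) (use k in auto)
  then show ?thesis using k u by (simp add: scalar_prod_def) (smt (verit) mult_pos_pos)
qed

lemma has_eigenvalues_replace:
  fixes M M' :: "real mat"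
  assumes M: "M \<in> carrier_mat n n" and M': "M' \<in> carrier_mat n n"
    and char: "char_poly M' * (\<Prod>x\<leftarrow>xs. [:- x, 1:]) = char_poly M * (\<Prod>y\<leftarrow>ys. [:- y, 1:])"
    and eig: "has_eigenvalues M (map of_real xs @ es)"
  shows "has_eigenvalues M' (map of_real ys @ es)"
proof -
  interpret map_poly_of_real: map_poly_comm_ring_hom complex_of_real ..
  let ?c = "\<lambda>A :: real mat. char_poly (map_mat complex_of_real A)"
  let ?P = "\<lambda>zs :: complex list. \<Prod>z\<leftarrow>zs. [:- z, 1:]"
  have lin1: "map_poly complex_of_real [:- x, 1:] = [:- complex_of_real x, 1:]" for x
    by simp
  have lin: "map_poly complex_of_real (\<Prod>x\<leftarrow>zs. [:- x, 1:]) = ?P (map of_real zs)" for zs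
    by (induction zs) (simp_all only: list.map prod_list.Cons prod_list.Nil
        map_poly_of_real.hom_mult map_poly_of_real.hom_one lin1)
  have "?c M' * ?P (map of_real xs) = ?c M * ?P (map of_real ys)"
    using arg_cong[OF char, of "map_poly complex_of_real"]
    by (simp only: map_poly_of_real.hom_mult lin of_real_hom.char_poly_hom[OF M] of_real_hom.char_poly_hom[OF M'])
  also have "?c M = ?P (map of_real xs) * ?P es"
    using eig by (simp add: has_eigenvalues_def)
  finally have "?P (map of_real xs) * ?c M' = ?P (map of_real xs) * (?P (map of_real ys) * ?P es)"
    by (simp only: ac_simps)
  then have "?c M' = ?P (map of_real ys) * ?P es"
    by (rule mult_left_cancel[THEN iffD1, rotated]) (auto simp: prod_list_zero_iff)
  then show ?thesis by (simp add: has_eigenvalues_def)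
qed

definition block_diag :: "'a :: zero mat \<Rightarrow> 'a mat \<Rightarrow> 'a mat" where
  "block_diag B A = four_block_mat B (0\<^sub>m (dim_row B) (dim_col A)) (0\<^sub>m (dim_row A) (dim_col B)) A"

lemma has_eigenvalues_block_diag:
  assumes B: "B \<in> carrier_mat k k" and A: "A \<in> carrier_mat m m"
    and "has_eigenvalues B bs" and "has_eigenvalues A as"
  shows "has_eigenvalues (block_diag B A) (bs @ as)"
proof -
  let ?B = "map_mat complex_of_real B" and ?A = "map_mat complex_of_real A"
  have "map_mat complex_of_real (block_diag B A) = four_block_mat ?B (0\<^sub>m k m) (0\<^sub>m m k) ?A"
    using A B by (auto simp: block_diag_def intro!: eq_matI)
  moreover have "char_poly (four_block_mat ?B (0\<^sub>m k m) (0\<^sub>m m k) ?A) = char_poly ?B * char_poly ?A"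
    by (rule char_poly_0_block[OF refl]) (use assms in \<open>auto simp: has_eigenvalues_def\<close>)
  ultimately show ?thesis using assms by (simp add: has_eigenvalues_def)
qed

lemma (in index_perm) has_eigenvalues_permute_mat:
  assumes "A \<in> carrier_mat n n"
  shows "has_eigenvalues (permute_mat f A) es \<longleftrightarrow> has_eigenvalues A es"
proof -
  have "map_mat complex_of_real (permute_mat f A) = permute_mat f (map_mat complex_of_real A)"
    using assms by (auto simp: perm_less intro!: eq_matI)
  moreover have "similar_mat (map_mat complex_of_real A) (permute_mat f (map_mat complex_of_real A))"
    by (rule similar_permute_mat) (use assms in simp)
  ultimately show ?thesis by (simp add: has_eigenvalues_def char_poly_similar)
qed

text \<open>Placing A in the middle of B (first half of B, then A, then second half of B) makes
  a block-diagonal arrangement of two centrosymmetric matrices centrosymmetric.\<close>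

definition block_perm :: "nat \<Rightarrow> nat \<Rightarrow> nat \<Rightarrow> nat" where
  "block_perm h m i = (if i < h then i else if i < h + m then 2 * h + (i - h) else i - m)"

definition block_rev :: "nat \<Rightarrow> nat \<Rightarrow> nat \<Rightarrow> nat" where
  "block_rev h m k = (if k < 2 * h then 2 * h - 1 - k else 2 * h + (m - 1 - (k - 2 * h)))"

lemma block_perm_less: "i < 2 * h + m \<Longrightarrow> block_perm h m i < 2 * h + m"
  by (auto simp: block_perm_def)

lemma block_perm_bij: "bij_betw (block_perm h m) {..<2 * h + m} {..<2 * h + m}"
proof (rule bij_betw_imageI)
  show "inj_on (block_perm h m) {..<2 * h + m}" by (auto simp: inj_on_def block_perm_def)
  have "k \<in> block_perm h m ` {..<2 * h + m}" if "k < 2 * h + m" for k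
  proof
    show "k = block_perm h m (if k < h then k else if k < 2 * h then k + m else k - h)"
      using that by (auto simp: block_perm_def)
  qed (use that in auto)
  then show "block_perm h m ` {..<2 * h + m} = {..<2 * h + m}"
    using block_perm_less by auto
qed

interpretation block_perm: index_perm "2 * h + m" "block_perm h m"
  by unfold_locales (rule block_perm_bij)

lemma block_perm_rev:
  "i < 2 * h + m \<Longrightarrow> block_perm h m (2 * h + m - 1 - i) = block_rev h m (block_perm h m i)"
  by (auto simp: block_perm_def block_rev_def)

lemma block_rev_less: "k < 2 * h + m \<Longrightarrow> block_rev h m k < 2 * h + m"
  by (auto simp: block_rev_def)

lemma append_vec_block_rev:
  assumes x: "x \<in> carrier_vec (2 * h)" and y: "y \<in> carrier_vec m" and k: "k < 2 * h + m"
    and x_rev: "\<forall>i<2 * h. x $ (2 * h - 1 - i) = x $ i" and y_rev: "\<forall>i<m. y $ (m - 1 - i) = y $ i"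
  shows "(x @\<^sub>v y) $ block_rev h m k = (x @\<^sub>v y) $ k"
proof (cases "k < 2 * h")
  case True
  then show ?thesis using x y x_rev by (simp add: block_rev_def)
next
  case False
  then have "\<not> block_rev h m k < 2 * h" "block_rev h m k - 2 * h = m - 1 - (k - 2 * h)" "k - 2 * h < m"
    using k by (auto simp: block_rev_def)
  then show ?thesis using False k x y y_rev[rule_format, of "k - 2 * h"] block_rev_less[OF k] by simp
qed

lemma block_diag_block_rev:
  assumes B: "B \<in> carrier_mat (2 * h) (2 * h)" and A: "A \<in> carrier_mat m m"
    and k: "k < 2 * h + m" and l: "l < 2 * h + m"
    and B_rev: "\<forall>i<2 * h. \<forall>j<2 * h. B $$ (2 * h - 1 - i, 2 * h - 1 - j) = B $$ (i, j)"
    and A_rev: "\<forall>i<m. \<forall>j<m. A $$ (m - 1 - i, m - 1 - j) = A $$ (i, j)"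
  shows "block_diag B A $$ (block_rev h m k, block_rev h m l) = block_diag B A $$ (k, l)"
proof -
  have rev: "k < 2 * h \<Longrightarrow> block_rev h m k = 2 * h - 1 - k"
    "\<not> k < 2 * h \<Longrightarrow> block_rev h m k - 2 * h = m - 1 - (k - 2 * h) \<and> \<not> block_rev h m k < 2 * h"
    "l < 2 * h \<Longrightarrow> block_rev h m l = 2 * h - 1 - l"
    "\<not> l < 2 * h \<Longrightarrow> block_rev h m l - 2 * h = m - 1 - (l - 2 * h) \<and> \<not> block_rev h m l < 2 * h"
    using k l by (auto simp: block_rev_def)
  show ?thesis
    using A B k l rev block_rev_less[OF k] block_rev_less[OF l]
      B_rev[rule_format, of k l] A_rev[rule_format, of "k - 2 * h" "l - 2 * h"]
    by (auto simp: block_diag_def)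
qed

lemma ncs_perron_pair_block_perm:
  fixes M :: "real mat"
  assumes M: "M \<in> carrier_mat (2 * h + m) (2 * h + m)" and v: "v \<in> carrier_vec (2 * h + m)"
    and nonneg: "\<And>k l. k < 2 * h + m \<Longrightarrow> l < 2 * h + m \<Longrightarrow> M $$ (k, l) \<ge> 0"
    and sym: "\<And>k l. k < 2 * h + m \<Longrightarrow> l < 2 * h + m \<Longrightarrow>
      M $$ (block_rev h m k, block_rev h m l) = M $$ (k, l)"
    and v_nonneg: "\<And>k. k < 2 * h + m \<Longrightarrow> v $ k \<ge> 0"
    and v_sym: "\<And>k. k < 2 * h + m \<Longrightarrow> v $ block_rev h m k = v $ k"
    and v_pos: "v $ k > 0" "k < 2 * h + m"
    and ev: "M *\<^sub>v v = \<theta> \<cdot>\<^sub>v v" and evT: "transpose_mat M *\<^sub>v v = \<theta> \<cdot>\<^sub>v v"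
    and normal: "M * transpose_mat M = transpose_mat M * M"
  shows "ncs_perron_pair (permute_mat (block_perm h m) M) (2 * h + m) \<theta> (permute_vec (block_perm h m) v)"
  unfolding ncs_perron_pair_def
proof (intro conjI allI impI)
  let ?f = "block_perm h m" and ?N = "2 * h + m"
  have f: "?f i < ?N" if "i < ?N" for i using that by (rule block_perm.perm_less)
  show "permute_mat ?f M \<in> carrier_mat ?N ?N" using M by auto
  show "permute_vec ?f v \<in> carrier_vec ?N" using v by simp
  have "k \<in> ?f ` {..<?N}"
    using v_pos(2) bij_betw_imp_surj_on[OF block_perm_bij] by simp
  then obtain i where "i < ?N" "?f i = k" by auto
  then show "\<exists>i<?N. 0 < permute_vec ?f v $ i" using v v_pos by auto
  show "permute_mat ?f M *\<^sub>v permute_vec ?f v = \<theta> \<cdot>\<^sub>v permute_vec ?f v"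
    using v by (simp only: block_perm.permute_mat_mult_vec[OF M v] ev block_perm.permute_vec_smult)
  have MT: "transpose_mat M \<in> carrier_mat ?N ?N" using M by simp
  show "transpose_mat (permute_mat ?f M) *\<^sub>v permute_vec ?f v = \<theta> \<cdot>\<^sub>v permute_vec ?f v"
    using v by (simp only: block_perm.transpose_permute_mat[OF M] block_perm.permute_mat_mult_vec[OF MT v]
        evT block_perm.permute_vec_smult)
  show "permute_mat ?f M * transpose_mat (permute_mat ?f M) = transpose_mat (permute_mat ?f M) * permute_mat ?f M"
    by (rule block_perm.permute_mat_normal[OF M normal])
next
  fix i assume i: "i < 2 * h + m"
  then show "0 \<le> permute_vec (block_perm h m) v $ i"
    using v v_nonneg block_perm.perm_less by auto
  show "permute_vec (block_perm h m) v $ (2 * h + m - 1 - i) = permute_vec (block_perm h m) v $ i"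
    using i v v_sym block_perm.perm_less block_perm_rev[OF i] by auto
next
  fix i j assume i: "i < 2 * h + m" and j: "j < 2 * h + m"
  then show "0 \<le> permute_mat (block_perm h m) M $$ (i, j)"
    using M nonneg block_perm.perm_less by auto
  show "permute_mat (block_perm h m) M $$ (2 * h + m - 1 - i, 2 * h + m - 1 - j) = permute_mat (block_perm h m) M $$ (i, j)"
    using i j M sym block_perm.perm_less block_perm_rev[OF i] block_perm_rev[OF j] by auto
qed

lemma block_diag_perron_facts:
  assumes RB: "ncs_perron_pair B (2 * h) \<beta> w" and RA: "ncs_perron_pair A m \<alpha> u"
  defines "M \<equiv> block_diag B A" and "p \<equiv> 0\<^sub>v (2 * h) @\<^sub>v u" and "q \<equiv> w @\<^sub>v 0\<^sub>v m"
  shows "M \<in> carrier_mat (2 * h + m) (2 * h + m)" "p \<in> carrier_vec (2 * h + m)" "q \<in> carrier_vec (2 * h + m)"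
    "M *\<^sub>v p = \<alpha> \<cdot>\<^sub>v p" "M *\<^sub>v q = \<beta> \<cdot>\<^sub>v q"
    "transpose_mat M *\<^sub>v p = \<alpha> \<cdot>\<^sub>v p" "transpose_mat M *\<^sub>v q = \<beta> \<cdot>\<^sub>v q"
    "M * transpose_mat M = transpose_mat M * M"
    "p \<bullet> q = 0" "p \<bullet> p = u \<bullet> u" "q \<bullet> q = w \<bullet> w"
proof -
  note rb = RB[unfolded ncs_perron_pair_def] and ra = RA[unfolded ncs_perron_pair_def]
  have B: "B \<in> carrier_mat (2 * h) (2 * h)" and w: "w \<in> carrier_vec (2 * h)" using rb by auto
  have A: "A \<in> carrier_mat m m" and u: "u \<in> carrier_vec m" using ra by auto
  have M: "M = four_block_mat B (0\<^sub>m (2 * h) m) (0\<^sub>m m (2 * h)) A"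
    using A B by (simp add: M_def block_diag_def)
  have MT: "transpose_mat M = four_block_mat (transpose_mat B) (0\<^sub>m (2 * h) m) (0\<^sub>m m (2 * h)) (transpose_mat A)"
    unfolding M by (subst transpose_four_block_mat) (use A B in auto)
  have B0: "B *\<^sub>v 0\<^sub>v (2 * h) = 0\<^sub>v (2 * h)" "transpose_mat B *\<^sub>v 0\<^sub>v (2 * h) = 0\<^sub>v (2 * h)"
    using B by (auto intro!: eq_vecI)
  have A0: "A *\<^sub>v 0\<^sub>v m = 0\<^sub>v m" "transpose_mat A *\<^sub>v 0\<^sub>v m = 0\<^sub>v m"
    using A by (auto intro!: eq_vecI)
  show "M \<in> carrier_mat (2 * h + m) (2 * h + m)" unfolding M using A B by auto
  show "p \<in> carrier_vec (2 * h + m)" "q \<in> carrier_vec (2 * h + m)"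
    using u w by (auto simp: p_def q_def)
  show "M *\<^sub>v p = \<alpha> \<cdot>\<^sub>v p" unfolding M p_def
    by (subst mult_mat_vec_split[OF B A]) (use u ra B0 A0 in \<open>auto intro!: eq_vecI\<close>)
  show "M *\<^sub>v q = \<beta> \<cdot>\<^sub>v q" unfolding M q_def
    by (subst mult_mat_vec_split[OF B A]) (use w rb B0 A0 B in \<open>auto intro!: eq_vecI\<close>)
  show "transpose_mat M *\<^sub>v p = \<alpha> \<cdot>\<^sub>v p" unfolding MT p_def
    by (subst mult_mat_vec_split) (use A B u ra B0 A0 in \<open>auto intro!: eq_vecI\<close>)
  show "transpose_mat M *\<^sub>v q = \<beta> \<cdot>\<^sub>v q" unfolding MT q_def
    by (subst mult_mat_vec_split) (use A B w rb B0 A0 in \<open>auto intro!: eq_vecI\<close>)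
  show "M * transpose_mat M = transpose_mat M * M" unfolding MT unfolding M
    by (subst mult_four_block_mat, insert A B, auto, subst mult_four_block_mat, insert A B ra rb, auto)
  show "p \<bullet> q = 0" "p \<bullet> p = u \<bullet> u" "q \<bullet> q = w \<bullet> w"
    unfolding p_def q_def by (subst scalar_prod_append[of _ "2 * h" _ m], use u w in auto)+
qed

lemma ncs_perron_pair_sym_update_block_diag:
  assumes RB: "ncs_perron_pair B (2 * h) \<beta> w" and RA: "ncs_perron_pair A m \<alpha> u"
    and \<rho>: "\<rho> \<ge> 0" and \<theta>: "\<alpha> < \<theta>"
    and K: "(\<theta> - \<alpha>) * (\<theta> - \<beta>) = \<rho>\<^sup>2 * (u \<bullet> u) * (w \<bullet> w)"
  defines "p \<equiv> 0\<^sub>v (2 * h) @\<^sub>v u" and "q \<equiv> w @\<^sub>v 0\<^sub>v m"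
  defines "M \<equiv> sym_update (block_diag B A) \<rho> p q" and "v \<equiv> (\<rho> * (w \<bullet> w)) \<cdot>\<^sub>v p + (\<theta> - \<alpha>) \<cdot>\<^sub>v q"
  shows "ncs_perron_pair (permute_mat (block_perm h m) M) (2 * h + m) \<theta> (permute_vec (block_perm h m) v)"
proof -
  let ?N = "2 * h + m" and ?r = "block_rev h m"
  note facts = block_diag_perron_facts[OF RB RA, folded p_def q_def]
  note rb = RB[unfolded ncs_perron_pair_def] and ra = RA[unfolded ncs_perron_pair_def]
  have B: "B \<in> carrier_mat (2 * h) (2 * h)" and w: "w \<in> carrier_vec (2 * h)" using rb by auto
  have A: "A \<in> carrier_mat m m" and u: "u \<in> carrier_vec m" using ra by auto
  have p: "p $ k = (if k < 2 * h then 0 else u $ (k - 2 * h))" if "k < ?N" for k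
    using that u by (simp add: p_def)
  have q: "q $ k = (if k < 2 * h then w $ k else 0)" if "k < ?N" for k
    using that w by (simp add: q_def)
  have M0: "block_diag B A $$ (k, l) = (if k < 2 * h then (if l < 2 * h then B $$ (k, l) else 0)
      else if l < 2 * h then 0 else A $$ (k - 2 * h, l - 2 * h))" if "k < ?N" "l < ?N" for k l
    using that A B by (simp add: block_diag_def)
  have M: "M $$ (k, l) = block_diag B A $$ (k, l) + \<rho> * (p $ k * q $ l + q $ k * p $ l)"
    if "k < ?N" "l < ?N" for k l
    using that facts(1-3) by (simp add: M_def index_sym_update)
  have v: "v $ k = \<rho> * (w \<bullet> w) * p $ k + (\<theta> - \<alpha>) * q $ k" if "k < ?N" for k
    using that facts(2,3) by (simp add: v_def)
  have p_rev: "p $ ?r k = p $ k" and q_rev: "q $ ?r k = q $ k" if "k < ?N" for k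
    unfolding p_def q_def using that u w ra rb by (simp_all add: append_vec_block_rev)
  have M0_rev: "block_diag B A $$ (?r k, ?r l) = block_diag B A $$ (k, l)" if "k < ?N" "l < ?N" for k l
    using that A B ra rb by (simp add: block_diag_block_rev)
  have p_nonneg: "p $ k \<ge> 0" and q_nonneg: "q $ k \<ge> 0" if "k < ?N" for k
    using that ra rb by (auto simp: p q)
  have ww: "w \<bullet> w \<ge> 0" using ncs_perron_pair_self_scalar_pos[OF RB] by simp
  obtain k where k: "k < 2 * h" "w $ k > 0" using rb by auto
  show ?thesis
    unfolding M_def
  proof (rule ncs_perron_pair_block_perm)
    show "sym_update (block_diag B A) \<rho> p q \<in> carrier_mat ?N ?N" using facts(1-3) by simp
    show "v \<in> carrier_vec ?N" using facts(2,3) by (simp add: v_def)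
    show "v $ k > 0" "k < ?N" using k \<theta> by (auto simp: v p q)
    show "sym_update (block_diag B A) \<rho> p q *\<^sub>v v = \<theta> \<cdot>\<^sub>v v"
      using sym_update_eigenvector[OF facts(1-5,9), of \<theta> \<rho>] K by (simp add: facts(10,11) v_def ac_simps)
    show "transpose_mat (sym_update (block_diag B A) \<rho> p q) *\<^sub>v v = \<theta> \<cdot>\<^sub>v v"
      using sym_update_eigenvector[OF _ facts(2,3,6,7,9), of \<theta> \<rho>] K facts(1-3)
      by (simp add: transpose_sym_update facts(10,11) v_def ac_simps)
    show "sym_update (block_diag B A) \<rho> p q * transpose_mat (sym_update (block_diag B A) \<rho> p q)
        = transpose_mat (sym_update (block_diag B A) \<rho> p q) * sym_update (block_diag B A) \<rho> p q"
      by (rule sym_update_normal[OF facts(1-3)]) (simp_all add: facts(4-8))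
  next
    fix i j assume "i < ?N" "j < ?N"
    then show "sym_update (block_diag B A) \<rho> p q $$ (i, j) \<ge> 0"
      using ra rb \<rho> p_nonneg q_nonneg by (auto simp: M[unfolded M_def] M0)
    show "sym_update (block_diag B A) \<rho> p q $$ (?r i, ?r j) = sym_update (block_diag B A) \<rho> p q $$ (i, j)"
      using \<open>i < ?N\<close> \<open>j < ?N\<close> block_rev_less by (simp add: M[unfolded M_def] M0_rev p_rev q_rev)
  next
    fix i assume "i < ?N"
    then show "v $ i \<ge> 0" using \<rho> \<theta> ww p_nonneg q_nonneg by (simp add: v)
    show "v $ ?r i = v $ i" using \<open>i < ?N\<close> block_rev_less by (simp add: v p_rev q_rev)
  qed
qed

text \<open>Gluing two such matrices by the update rho (p q^T + q p^T) between their Perron vectors,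
  with rho as below, replaces the eigenvalues \<alpha>, \<beta> by \<theta>, \<alpha> + \<beta> - \<theta> and keeps all others.\<close>

lemma ncs_merge:
  assumes RB: "ncs_perron_pair B (2 * h) \<beta> w" and RA: "ncs_perron_pair A m \<alpha> u"
    and eig_B: "has_eigenvalues B (of_real \<beta> # bs)" and eig_A: "has_eigenvalues A (of_real \<alpha> # as)"
    and \<theta>: "\<alpha> < \<theta>" "\<beta> \<le> \<theta>"
  shows "\<exists>Q v. ncs_perron_pair Q (2 * h + m) \<theta> v \<and>
    has_eigenvalues Q (of_real \<theta> # of_real (\<alpha> + \<beta> - \<theta>) # bs @ as)"
proof -
  define p where "p = 0\<^sub>v (2 * h) @\<^sub>v u"
  define q where "q = w @\<^sub>v 0\<^sub>v m"
  define \<rho> where "\<rho> = sqrt ((\<theta> - \<alpha>) * (\<theta> - \<beta>) / ((u \<bullet> u) * (w \<bullet> w)))"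
  define M where "M = sym_update (block_diag B A) \<rho> p q"
  note facts = block_diag_perron_facts[OF RB RA, folded p_def q_def]
  have uu: "u \<bullet> u > 0" and ww: "w \<bullet> w > 0"
    using ncs_perron_pair_self_scalar_pos[OF RA] ncs_perron_pair_self_scalar_pos[OF RB] .
  have \<rho>: "\<rho> \<ge> 0" using \<theta> uu ww by (simp add: \<rho>_def)
  have K: "(\<theta> - \<alpha>) * (\<theta> - \<beta>) = \<rho>\<^sup>2 * (u \<bullet> u) * (w \<bullet> w)"
    using \<theta> uu ww by (simp add: \<rho>_def)
  have "B \<in> carrier_mat (2 * h) (2 * h)" "A \<in> carrier_mat m m"
    using RA RB by (simp_all add: ncs_perron_pair_def)
  from has_eigenvalues_block_diag[OF this eig_B eig_A]
  have "has_eigenvalues (block_diag B A) (of_real \<beta> # bs @ of_real \<alpha> # as)" by simp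
  then have eig: "has_eigenvalues (block_diag B A) (map of_real [\<alpha>, \<beta>] @ bs @ as)"
    by (rule has_eigenvalues_mset[THEN iffD1, rotated]) simp
  have "char_poly M * [:- \<alpha>, 1:] * [:- \<beta>, 1:]
      = char_poly (block_diag B A) * [:- \<theta>, 1:] * [:- (\<alpha> + \<beta> - \<theta>), 1:]"
    using char_poly_sym_update[OF facts(1-5,9)] K \<theta> ww by (simp add: M_def facts(10,11) ac_simps)
  then have char: "char_poly M * (\<Prod>x\<leftarrow>[\<alpha>, \<beta>]. [:- x, 1:])
      = char_poly (block_diag B A) * (\<Prod>x\<leftarrow>[\<theta>, \<alpha> + \<beta> - \<theta>]. [:- x, 1:])"
    by (simp only: list.map prod_list.Cons prod_list.Nil mult_1_right mult.assoc)
  have "has_eigenvalues M (map of_real [\<theta>, \<alpha> + \<beta> - \<theta>] @ bs @ as)"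
    by (rule has_eigenvalues_replace[OF facts(1) _ char eig]) (use facts(1-3) in \<open>simp add: M_def\<close>)
  then show ?thesis
    using ncs_perron_pair_sym_update_block_diag[OF RB RA \<rho> \<theta>(1) K] facts(1-3)
    by (auto simp: M_def p_def q_def block_perm.has_eigenvalues_permute_mat)
qed

definition ones_vec :: "nat \<Rightarrow> real vec" where
  "ones_vec n = vec n (\<lambda>_. 1)"

lemma ones_vec_carrier[simp]: "ones_vec n \<in> carrier_vec n"
  by (simp add: ones_vec_def)

lemma has_eigenvalues_smult_one: "has_eigenvalues (a \<cdot>\<^sub>m 1\<^sub>m n) (replicate n (of_real a))"
proof -
  let ?D = "map_mat complex_of_real (a \<cdot>\<^sub>m 1\<^sub>m n)"
  have "char_poly ?D = (\<Prod>a\<leftarrow>diag_mat ?D. [:- a, 1:])"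
    by (rule char_poly_upper_triangular) (auto simp: upper_triangular_def)
  moreover have "diag_mat ?D = replicate n (of_real a)"
    by (auto simp: diag_mat_def list_eq_iff_nth_eq)
  ultimately show ?thesis by (simp add: has_eigenvalues_def)
qed

lemma ncs_perron_pair_scalar: "0 \<le> \<alpha> \<Longrightarrow> ncs_perron_pair (\<alpha> \<cdot>\<^sub>m 1\<^sub>m 1) 1 \<alpha> (ones_vec 1)"
  by (auto simp: ncs_perron_pair_def ones_vec_def scalar_prod_def intro!: eq_vecI eq_matI)

definition sym2_mat :: "real \<Rightarrow> real \<Rightarrow> real mat" where
  "sym2_mat \<alpha> \<nu> = mat 2 2 (\<lambda>(i, j). if i = j then (\<alpha> + \<nu>) / 2 else (\<alpha> - \<nu>) / 2)"

lemma ncs_perron_pair_sym2_mat: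
  assumes "\<alpha> + \<nu> \<ge> 0" "\<alpha> - \<nu> \<ge> 0"
  shows "ncs_perron_pair (sym2_mat \<alpha> \<nu>) 2 \<alpha> (ones_vec 2)"
proof -
  have T: "transpose_mat (sym2_mat \<alpha> \<nu>) = sym2_mat \<alpha> \<nu>"
    by (auto simp: sym2_mat_def intro!: eq_matI)
  have "sym2_mat \<alpha> \<nu> *\<^sub>v ones_vec 2 = \<alpha> \<cdot>\<^sub>v ones_vec 2"
    by (intro eq_vecI) (auto simp: sym2_mat_def ones_vec_def scalar_prod_def numeral_2_eq_2 field_simps)
  then show ?thesis using assms T
    by (auto simp: ncs_perron_pair_def sym2_mat_def ones_vec_def less_2_cases_iff)
qed

lemma has_eigenvalues_sym2_mat: "has_eigenvalues (sym2_mat \<alpha> \<nu>) [of_real \<alpha>, of_real \<nu>]"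
proof -
  define D where "D = \<nu> \<cdot>\<^sub>m (1\<^sub>m 2 :: real mat)"
  define y where "y = ((\<alpha> - \<nu>) / 2) \<cdot>\<^sub>v ones_vec 2"
  have D: "D \<in> carrier_mat 2 2" and y: "y \<in> carrier_vec 2" by (simp_all add: D_def y_def)
  have ev: "D *\<^sub>v ones_vec 2 = \<nu> \<cdot>\<^sub>v ones_vec 2"
    by (intro eq_vecI) (auto simp: D_def ones_vec_def scalar_prod_def numeral_2_eq_2)
  have "ones_vec 2 $ 0 \<noteq> 0\<^sub>v 2 $ 0" by (simp add: ones_vec_def)
  then have ones0: "ones_vec 2 \<noteq> 0\<^sub>v 2" by auto
  have "\<nu> + y \<bullet> ones_vec 2 = \<alpha>"
    by (simp add: y_def ones_vec_def scalar_prod_def numeral_2_eq_2 field_simps)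
  moreover have "sym2_mat \<alpha> \<nu> = D + outer_mat (ones_vec 2) y"
    by (intro eq_matI) (auto simp: sym2_mat_def D_def y_def ones_vec_def field_simps)
  ultimately have char: "char_poly (sym2_mat \<alpha> \<nu>) * (\<Prod>x\<leftarrow>[\<nu>]. [:- x, 1:]) = char_poly D * (\<Prod>x\<leftarrow>[\<alpha>]. [:- x, 1:])"
    using brauer_char_poly[OF D _ y ev ones0] by simp
  have eig_D: "has_eigenvalues D (map of_real [\<nu>] @ [of_real \<nu>])"
    using has_eigenvalues_smult_one[of \<nu> 2] by (simp add: D_def numeral_2_eq_2)
  have "sym2_mat \<alpha> \<nu> \<in> carrier_mat 2 2" by (simp add: sym2_mat_def)
  from has_eigenvalues_replace[OF D this char eig_D] show ?thesis by simp
qed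

text \<open>Suleimanova-type realisation: the negative eigenvalues are split off one at a time by
  gluing 2 \<times> 2 blocks [[a, b], [b, a]] of Perron value -\<nu>.\<close>

lemma suleimanova_ncs:
  assumes "\<forall>\<nu>\<in>set \<nu>s. \<nu> < 0" and "0 \<le> \<alpha> + sum_list \<nu>s"
  shows "\<exists>A u. ncs_perron_pair A (length \<nu>s + 1) \<alpha> u \<and> has_eigenvalues A (map of_real (\<alpha> # \<nu>s))"
  using assms
proof (induction \<nu>s arbitrary: \<alpha> rule: induct_list012)
  case 1
  then have "ncs_perron_pair (\<alpha> \<cdot>\<^sub>m 1\<^sub>m 1) 1 \<alpha> (ones_vec 1)"
    by (intro ncs_perron_pair_scalar) simp
  then show ?case using has_eigenvalues_smult_one[of \<alpha> 1] by auto
next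
  case (2 \<nu>)
  then have "ncs_perron_pair (sym2_mat \<alpha> \<nu>) 2 \<alpha> (ones_vec 2)"
    by (intro ncs_perron_pair_sym2_mat) auto
  then show ?case using has_eigenvalues_sym2_mat[of \<alpha> \<nu>]
    by (intro exI[of _ "sym2_mat \<alpha> \<nu>"] exI[of _ "ones_vec 2"]) (simp add: numeral_2_eq_2)
next
  case (3 \<nu>\<^sub>1 \<nu>\<^sub>2 \<nu>s)
  define \<alpha>' where "\<alpha>' = \<alpha> + \<nu>\<^sub>1 + \<nu>\<^sub>2"
  have neg: "\<forall>\<nu>\<in>set \<nu>s. \<nu> < 0" and \<nu>: "\<nu>\<^sub>1 < 0" "\<nu>\<^sub>2 < 0" using "3.prems"(1) by auto
  have "sum_list \<nu>s \<le> 0" using neg by (induction \<nu>s) auto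
  then have \<alpha>: "\<alpha>' < \<alpha>" "- \<nu>\<^sub>2 \<le> \<alpha>" using "3.prems"(2) \<nu> by (auto simp: \<alpha>'_def)
  have "0 \<le> \<alpha>' + sum_list \<nu>s" using "3.prems"(2) by (simp add: \<alpha>'_def)
  then obtain A u where A: "ncs_perron_pair A (length \<nu>s + 1) \<alpha>' u"
    and eig_A: "has_eigenvalues A (map of_real (\<alpha>' # \<nu>s))"
    using "3.IH"(1)[OF neg] by blast
  have B: "ncs_perron_pair (sym2_mat (- \<nu>\<^sub>2) \<nu>\<^sub>2) (2 * 1) (- \<nu>\<^sub>2) (ones_vec 2)"
    using ncs_perron_pair_sym2_mat[of "- \<nu>\<^sub>2" \<nu>\<^sub>2] \<nu> by simp
  have eig_B: "has_eigenvalues (sym2_mat (- \<nu>\<^sub>2) \<nu>\<^sub>2) (of_real (- \<nu>\<^sub>2) # [of_real \<nu>\<^sub>2])"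
    by (rule has_eigenvalues_sym2_mat)
  have eig_A': "has_eigenvalues A (of_real \<alpha>' # map of_real \<nu>s)" using eig_A by simp
  obtain Q v where Q: "ncs_perron_pair Q (2 * 1 + (length \<nu>s + 1)) \<alpha> v"
    and eig_Q: "has_eigenvalues Q (of_real \<alpha> # of_real (\<alpha>' + - \<nu>\<^sub>2 - \<alpha>) # [of_real \<nu>\<^sub>2] @ map of_real \<nu>s)"
    using ncs_merge[OF B A eig_B eig_A' \<alpha>] by blast
  have "\<alpha>' + - \<nu>\<^sub>2 - \<alpha> = \<nu>\<^sub>1" by (simp add: \<alpha>'_def)
  then have "has_eigenvalues Q (map of_real (\<alpha> # \<nu>\<^sub>1 # \<nu>\<^sub>2 # \<nu>s))"
    using eig_Q by simp
  then show ?case using Q by auto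
qed

definition omega8 :: "nat \<Rightarrow> int \<Rightarrow> complex" where
  "omega8 k t = cis (pi * real k * real_of_int t / 4)"

lemma omega8_pow: "omega8 k t = omega8 1 t ^ k"
  unfolding omega8_def DeMoivre by (simp add: algebra_simps)

lemma omega8_add: "omega8 k t * omega8 k s = omega8 k (t + s)"
  unfolding omega8_def cis_mult by (rule arg_cong[where f=cis], simp add: field_simps)

lemma omega8_minus: "omega8 k (- t) = cnj (omega8 k t)"
  unfolding omega8_def cis_cnj by simp

lemma omega8_period: "omega8 k (t + 8 * s) = omega8 k t"
proof -
  have "omega8 k (t + 8 * s) = omega8 k t * omega8 k (8 * s)" by (simp add: omega8_add)
  also have "omega8 k (8 * s) = cis (2 * pi * of_int (int k * s))" unfolding omega8_def
    by (simp add: algebra_simps)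
  also have "\<dots> = 1" by (rule cis_multiple_2pi, auto)
  finally show ?thesis by simp
qed

lemma omega8_conj: "k \<le> 8 \<Longrightarrow> omega8 (8 - k) t = cnj (omega8 k t)"
proof -
  assume k: "k \<le> 8"
  have "omega8 (8 - k) t = cis (2 * pi * of_int t + pi * real k * (- real_of_int t) / 4)" unfolding omega8_def
    using k by (intro arg_cong[where f=cis], simp add: of_nat_diff field_simps)
  also have "\<dots> = cis (2 * pi * of_int t) * cis (pi * real k * (- real_of_int t) / 4)" by (simp only: cis_mult)
  also have "cis (2 * pi * of_int t) = 1" by (rule cis_multiple_2pi, auto)
  finally show ?thesis unfolding omega8_def cis_cnj by simp
qed

lemma sum_omega8: assumes "\<not> 8 dvd t" shows "(\<Sum>k<8. omega8 k t) = 0"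
proof -
  define z where "z = omega8 1 t"
  have z8: "z ^ 8 = 1"
  proof -
    have "z ^ 8 = omega8 8 t" unfolding z_def by (rule omega8_pow[symmetric])
    also have "\<dots> = cis (2 * pi * of_int t)" unfolding omega8_def by (simp add: algebra_simps)
    also have "\<dots> = 1" by (rule cis_multiple_2pi, auto)
    finally show ?thesis .
  qed
  have z1: "z \<noteq> 1"
  proof
    assume "z = 1"
    then have "Re z = 1" by simp
    then have "cos (pi * real_of_int t / 4) = 1" by (simp add: z_def omega8_def)
    then obtain n :: int where "pi * real_of_int t / 4 = n * 2 * pi" unfolding cos_one_2pi_int by auto
    hence "real_of_int t = real_of_int (8 * n)" by (simp add: field_simps)
    hence "t = 8 * n" by linarith
    thus False using assms by auto
  qed
  have "(\<Sum>k<8. omega8 k t) = (\<Sum>k<8. z ^ k)" unfolding z_def by (rule sum.cong[OF refl], rule omega8_pow)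
  also have "\<dots> = 0" unfolding sum_gp_strict using z1 z8 by simp
  finally show ?thesis .
qed

lemma not_8_dvd_diff: "k < 8 \<Longrightarrow> l < 8 \<Longrightarrow> k \<noteq> l \<Longrightarrow> \<not> (8::int) dvd (int k - int l)"
  using dvd_imp_le_int[of "int k - int l" 8] by auto

lemma omega8_diff: "omega8 k (a - b) = omega8 k a * omega8 k (- b)"
  using omega8_add[of k a "- b"] by simp

lemma omega8_0_right: "omega8 k 0 = 1" unfolding omega8_def by simp

lemma omega8_0_left: "omega8 0 t = 1" unfolding omega8_def by simp


lemma sum_lessThan_8: "(\<Sum>k<(8::nat). f k) = f 0 + f 1 + f 2 + f 3 + f 4 + f 5 + f 6 + (f 7 :: 'a :: comm_monoid_add)"
  by (simp add: eval_nat_numeral ac_simps)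

lemma sum_omega8_minus: assumes k: "k < 8" shows "(\<Sum>j<8. omega8 k (- int j)) = (if k = 0 then 8 else 0)"
proof (cases "k = 0")
  case True thus ?thesis by (simp add: omega8_def)
next
  case False
  have "(\<Sum>j<8. omega8 k (- int j)) = (\<Sum>j<8. omega8 j (- int k))" by (rule sum.cong, auto simp: omega8_def intro!: arg_cong[where f=cis])
  also have "\<dots> = 0" using not_8_dvd_diff[of 0 k] k False by (simp add: sum_omega8)
  finally show ?thesis using False by simp
qed

definition circ8_eig :: "real \<Rightarrow> real \<Rightarrow> complex \<Rightarrow> complex \<Rightarrow> complex \<Rightarrow> nat \<Rightarrow> complex" where
  "circ8_eig r mu z1 z2 z3 k = [of_real r, z1, z2, z3, of_real mu, cnj z3, cnj z2, cnj z1] ! k"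

definition circ8_entry :: "real \<Rightarrow> real \<Rightarrow> complex \<Rightarrow> complex \<Rightarrow> complex \<Rightarrow> int \<Rightarrow> real" where
  "circ8_entry r mu z1 z2 z3 t = (r + mu * Re (omega8 4 t) + 2 * Re (z1 * omega8 1 t) + 2 * Re (z2 * omega8 2 t) + 2 * Re (z3 * omega8 3 t)) / 8"

lemma sum_circ8_eig_omega8: "(\<Sum>k<8. circ8_eig r mu z1 z2 z3 k * omega8 k t) = of_real (8 * circ8_entry r mu z1 z2 z3 t)"
proof -
  have e5: "omega8 5 t = cnj (omega8 3 t)" using omega8_conj[of 3 t] by simp
  have e6: "omega8 6 t = cnj (omega8 2 t)" using omega8_conj[of 2 t] by simp
  have e7: "omega8 7 t = cnj (omega8 1 t)" using omega8_conj[of 1 t] by simp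
  have e4: "Im (omega8 4 t) = 0" using omega8_conj[of 4 t] by (simp add: complex_eq_iff)
  have "(\<Sum>k<8. circ8_eig r mu z1 z2 z3 k * omega8 k t) = of_real r + (z1 * omega8 1 t + cnj (z1 * omega8 1 t)) + (z2 * omega8 2 t + cnj (z2 * omega8 2 t))
     + (z3 * omega8 3 t + cnj (z3 * omega8 3 t)) + of_real mu * omega8 4 t"
    unfolding sum_lessThan_8 by (simp add: circ8_eig_def omega8_0_left e5 e6 e7)
  also have "omega8 4 t = of_real (Re (omega8 4 t))" using e4 by (simp add: complex_eq_iff)
  finally show ?thesis unfolding complex_add_cnj circ8_entry_def by simp
qed

lemma circ8_entry_period: "circ8_entry r mu z1 z2 z3 (t + 8 * s) = circ8_entry r mu z1 z2 z3 t"
  unfolding circ8_entry_def omega8_period ..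

lemma circ8_entry_nonneg: assumes "r \<ge> \<bar>mu\<bar> + 2 * (cmod z1 + cmod z2 + cmod z3)"
  shows "circ8_entry r mu z1 z2 z3 t \<ge> 0"
proof -
  have b: "\<bar>Re (z * omega8 k t)\<bar> \<le> cmod z" for z k
    using abs_Re_le_cmod[of "z * omega8 k t"] by (simp add: norm_mult omega8_def)
  have b4: "\<bar>mu * Re (omega8 4 t)\<bar> \<le> \<bar>mu\<bar>"
    using b[of 1 4] by (simp add: abs_mult mult_left_le)
  have "0 \<le> r + mu * Re (omega8 4 t) + 2 * Re (z1 * omega8 1 t) + 2 * Re (z2 * omega8 2 t) + 2 * Re (z3 * omega8 3 t)"
    using assms b[of z1 1] b[of z2 2] b[of z3 3] b4 unfolding abs_le_iff by (smt (verit))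
  thus ?thesis unfolding circ8_entry_def by simp
qed

lemma circ8_row_sum: "(\<Sum>j<8. circ8_entry r mu z1 z2 z3 (int i - int j)) = r"
proof -
  have "complex_of_real (8 * (\<Sum>j<8. circ8_entry r mu z1 z2 z3 (int i - int j)))
    = (\<Sum>j<8. \<Sum>k<8. circ8_eig r mu z1 z2 z3 k * omega8 k (int i - int j))"
    by (simp add: sum_circ8_eig_omega8 sum_distrib_left)
  also have "\<dots> = (\<Sum>k<8. circ8_eig r mu z1 z2 z3 k * omega8 k (int i) * (\<Sum>j<8. omega8 k (- int j)))"
    by (subst sum.swap, rule sum.cong, auto simp: sum_distrib_left omega8_diff ac_simps)
  also have "\<dots> = (\<Sum>k<(8::nat). if k = 0 then 8 * of_real r else 0)"
    by (rule sum.cong, auto simp: sum_omega8_minus circ8_eig_def omega8_0_left)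
  also have "\<dots> = complex_of_real (8 * r)" by simp
  finally show ?thesis by (metis of_real_eq_iff mult_cancel_left zero_neq_numeral)
qed

lemma circ8_col_sum: "(\<Sum>i<8. circ8_entry r mu z1 z2 z3 (int i - int j)) = r"
proof -
  have "complex_of_real (8 * (\<Sum>i<8. circ8_entry r mu z1 z2 z3 (int i - int j)))
    = (\<Sum>i<8. \<Sum>k<8. circ8_eig r mu z1 z2 z3 k * omega8 k (int i - int j))"
    by (simp add: sum_circ8_eig_omega8 sum_distrib_left)
  also have "\<dots> = (\<Sum>k<8. circ8_eig r mu z1 z2 z3 k * omega8 k (- int j) * cnj (\<Sum>i<8. omega8 k (- int i)))"
  proof (subst sum.swap, rule sum.cong[OF refl])
    fix k
    have "(\<Sum>i<8. circ8_eig r mu z1 z2 z3 k * omega8 k (int i - int j)) = (\<Sum>i<8. circ8_eig r mu z1 z2 z3 k * omega8 k (- int j) * cnj (omega8 k (- int i)))"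
      by (rule sum.cong, auto simp: omega8_minus[symmetric] omega8_add)
    thus "(\<Sum>i<8. circ8_eig r mu z1 z2 z3 k * omega8 k (int i - int j)) = circ8_eig r mu z1 z2 z3 k * omega8 k (- int j) * cnj (\<Sum>i<8. omega8 k (- int i))"
      by (simp add: sum_distrib_left)
  qed
  also have "\<dots> = (\<Sum>k<(8::nat). if k = 0 then 8 * of_real r else 0)"
    by (rule sum.cong, auto simp: sum_omega8_minus circ8_eig_def omega8_0_left)
  also have "\<dots> = complex_of_real (8 * r)" by simp
  finally show ?thesis by (metis of_real_eq_iff mult_cancel_left zero_neq_numeral)
qed

definition dft8 :: "complex mat" where "dft8 = mat 8 8 (\<lambda>(i,k). omega8 k (int i))"
definition idft8 :: "complex mat" where "idft8 = mat 8 8 (\<lambda>(k,j). omega8 k (- int j) / 8)"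
definition diag8 :: "(nat \<Rightarrow> complex) \<Rightarrow> complex mat" where "diag8 d = mat 8 8 (\<lambda>(i,j). if i = j then d i else 0)"

lemma dft8_carrier[simp]: "dft8 \<in> carrier_mat 8 8" "idft8 \<in> carrier_mat 8 8" "diag8 d \<in> carrier_mat 8 8"
  by (auto simp: dft8_def idft8_def diag8_def)

lemma dft8_dims[simp]: "dim_row dft8 = 8" "dim_col dft8 = 8" "dim_row idft8 = 8" "dim_col idft8 = 8"
  "dim_row (diag8 d) = 8" "dim_col (diag8 d) = 8"
  by (auto simp: dft8_def idft8_def diag8_def)

lemma sum_atLeast0_8: "(\<Sum>k\<in>{0..<8}. f k) = (\<Sum>k<(8::nat). f k)" by (simp add: atLeast0LessThan)

lemma index_dft8_diag8_idft8: assumes i: "i < 8" and j: "j < 8"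
  shows "(dft8 * diag8 d * idft8) $$ (i,j) = (\<Sum>k<8. d k * omega8 k (int i - int j)) / 8"
proof -
  have FD: "(dft8 * diag8 d) $$ (i,k) = omega8 k (int i) * d k" if k: "k < 8" for k
  proof -
    have "(dft8 * diag8 d) $$ (i,k) = (\<Sum>l\<in>{0..<8}. dft8 $$ (i,l) * diag8 d $$ (l,k))"
      using i k by (simp add: scalar_prod_def)
    also have "\<dots> = (\<Sum>l\<in>{0..<8}. if l = k then omega8 k (int i) * d k else 0)"
      by (rule sum.cong, insert i k, auto simp: dft8_def diag8_def)
    finally show ?thesis using k by simp
  qed
  have "(dft8 * diag8 d * idft8) $$ (i,j) = (\<Sum>k\<in>{0..<8}. (dft8 * diag8 d) $$ (i,k) * idft8 $$ (k,j))"
    using i j by (simp add: scalar_prod_def)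
  also have "\<dots> = (\<Sum>k<8. d k * omega8 k (int i - int j) / 8)" unfolding sum_atLeast0_8
  proof (rule sum.cong[OF refl])
    fix k assume "k \<in> {..<8::nat}"
    hence k: "k < 8" by auto
    show "(dft8 * diag8 d) $$ (i,k) * idft8 $$ (k,j) = d k * omega8 k (int i - int j) / 8"
      unfolding FD[OF k] using k j by (simp add: idft8_def omega8_diff)
  qed
  finally show ?thesis by (simp add: sum_divide_distrib)
qed

lemma dft8_idft8: "dft8 * idft8 = 1\<^sub>m 8"
proof (rule eq_matI)
  fix i j assume "i < dim_row (1\<^sub>m 8 :: complex mat)" "j < dim_col (1\<^sub>m 8 :: complex mat)"
  hence i: "i < 8" and j: "j < 8" by auto
  have "(dft8 * idft8) $$ (i,j) = (\<Sum>k<8. omega8 k (int i - int j)) / 8"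
    using i j by (simp add: scalar_prod_def sum_atLeast0_8 dft8_def idft8_def omega8_diff sum_divide_distrib)
  also have "\<dots> = 1\<^sub>m 8 $$ (i,j)"
  proof (cases "i = j")
    case True thus ?thesis using i by (simp add: omega8_0_right)
  next
    case False
    then show ?thesis using sum_omega8 not_8_dvd_diff[OF i j] i j by simp
  qed
  finally show "(dft8 * idft8) $$ (i,j) = 1\<^sub>m 8 $$ (i,j)" .
qed auto

lemma idft8_dft8: "idft8 * dft8 = 1\<^sub>m 8"
proof (rule eq_matI)
  fix k l assume "k < dim_row (1\<^sub>m 8 :: complex mat)" "l < dim_col (1\<^sub>m 8 :: complex mat)"
  hence k: "k < 8" and l: "l < 8" by auto
  have e: "omega8 k (- int i) * omega8 l (int i) = omega8 i (int l - int k)" for i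
    unfolding omega8_def cis_mult by (rule arg_cong[where f=cis], simp add: field_simps)
  have "(idft8 * dft8) $$ (k,l) = (\<Sum>i<8. omega8 k (- int i) * omega8 l (int i)) / 8"
    using k l by (simp add: scalar_prod_def sum_atLeast0_8 dft8_def idft8_def sum_divide_distrib)
  also have "\<dots> = (\<Sum>i<8. omega8 i (int l - int k)) / 8" unfolding e ..
  also have "\<dots> = 1\<^sub>m 8 $$ (k,l)"
  proof (cases "k = l")
    case True thus ?thesis using k by (simp add: omega8_0_right)
  next
    case False
    then show ?thesis using sum_omega8 not_8_dvd_diff[OF l k] k l by simp
  qed
  finally show "(idft8 * dft8) $$ (k,l) = 1\<^sub>m 8 $$ (k,l)" .
qed auto

definition circ8 :: "real \<Rightarrow> real \<Rightarrow> complex \<Rightarrow> complex \<Rightarrow> complex \<Rightarrow> real mat" where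
  "circ8 r mu z1 z2 z3 = mat 8 8 (\<lambda>(i,j). circ8_entry r mu z1 z2 z3 (int i - int j))"

lemma circ8_carrier[simp]: "circ8 r mu z1 z2 z3 \<in> carrier_mat 8 8" by (simp add: circ8_def)

lemma circ8_dims[simp]: "dim_row (circ8 r mu z1 z2 z3) = 8" "dim_col (circ8 r mu z1 z2 z3) = 8" by (simp_all add: circ8_def)

lemma circ8_dft: "map_mat complex_of_real (circ8 r mu z1 z2 z3) = dft8 * diag8 (circ8_eig r mu z1 z2 z3) * idft8"
proof (rule eq_matI)
  fix i j assume "i < dim_row (dft8 * diag8 (circ8_eig r mu z1 z2 z3) * idft8)" "j < dim_col (dft8 * diag8 (circ8_eig r mu z1 z2 z3) * idft8)"
  hence i: "i < 8" and j: "j < 8" by auto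
  show "map_mat complex_of_real (circ8 r mu z1 z2 z3) $$ (i, j) = (dft8 * diag8 (circ8_eig r mu z1 z2 z3) * idft8) $$ (i, j)"
    unfolding index_dft8_diag8_idft8[OF i j] sum_circ8_eig_omega8 using i j by (simp add: circ8_def)
qed auto

lemma transpose_circ8_dft: "map_mat complex_of_real (transpose_mat (circ8 r mu z1 z2 z3)) = dft8 * diag8 (\<lambda>k. cnj (circ8_eig r mu z1 z2 z3 k)) * idft8"
proof (rule eq_matI)
  fix i j assume "i < dim_row (dft8 * diag8 (\<lambda>k. cnj (circ8_eig r mu z1 z2 z3 k)) * idft8)" "j < dim_col (dft8 * diag8 (\<lambda>k. cnj (circ8_eig r mu z1 z2 z3 k)) * idft8)"
  hence i: "i < 8" and j: "j < 8" by auto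
  have "(\<Sum>k<8. cnj (circ8_eig r mu z1 z2 z3 k) * omega8 k (int i - int j)) = cnj (\<Sum>k<8. circ8_eig r mu z1 z2 z3 k * omega8 k (int j - int i))"
    by (simp add: omega8_minus[symmetric])
  also have "\<dots> = of_real (8 * circ8_entry r mu z1 z2 z3 (int j - int i))" unfolding sum_circ8_eig_omega8 by simp
  finally have eq: "(\<Sum>k<8. cnj (circ8_eig r mu z1 z2 z3 k) * omega8 k (int i - int j)) = of_real (8 * circ8_entry r mu z1 z2 z3 (int j - int i))" .
  show "map_mat complex_of_real (transpose_mat (circ8 r mu z1 z2 z3)) $$ (i, j) = (dft8 * diag8 (\<lambda>k. cnj (circ8_eig r mu z1 z2 z3 k)) * idft8) $$ (i, j)"
    unfolding index_dft8_diag8_idft8[OF i j] eq using i j by (simp add: circ8_def)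
qed auto

lemma diag8_mult: "diag8 d * diag8 e = diag8 (\<lambda>i. d i * e i)"
proof (rule eq_matI)
  fix i j assume "i < dim_row (diag8 (\<lambda>i. d i * e i))" "j < dim_col (diag8 (\<lambda>i. d i * e i))"
  hence i: "i < 8" and j: "j < 8" by auto
  have "(diag8 d * diag8 e) $$ (i,j) = (\<Sum>k\<in>{0..<8}. diag8 d $$ (i,k) * diag8 e $$ (k,j))"
    using i j by (simp add: scalar_prod_def)
  also have "\<dots> = (\<Sum>k\<in>{0..<8}. if k = i then (if i = j then d i * e i else 0) else 0)"
    by (rule sum.cong[OF refl], insert i j, auto simp: diag8_def)
  finally show "(diag8 d * diag8 e) $$ (i,j) = diag8 (\<lambda>i. d i * e i) $$ (i,j)" using i j by (simp add: diag8_def)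
qed auto

lemma diag8_commute: "diag8 d * diag8 e = diag8 e * diag8 d"
  unfolding diag8_mult by (simp add: mult.commute)

lemma dft8_diag8_mult: "(dft8 * diag8 d * idft8) * (dft8 * diag8 e * idft8) = dft8 * (diag8 d * diag8 e) * idft8"
proof -
  have c: "dft8 \<in> carrier_mat 8 8" "idft8 \<in> carrier_mat 8 8" "diag8 d \<in> carrier_mat 8 8" "diag8 e \<in> carrier_mat 8 8" by auto
  define X where "X = dft8 * diag8 d"
  have X: "X \<in> carrier_mat 8 8" unfolding X_def by auto
  have Y: "dft8 * diag8 e * idft8 \<in> carrier_mat 8 8" by auto
  have "(dft8 * diag8 d * idft8) * (dft8 * diag8 e * idft8) = X * (idft8 * (dft8 * diag8 e * idft8))"
    unfolding X_def[symmetric] by (rule assoc_mult_mat[OF X c(2) Y])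
  also have "idft8 * (dft8 * diag8 e * idft8) = (idft8 * (dft8 * diag8 e)) * idft8"
    by (rule assoc_mult_mat[symmetric], auto)
  also have "idft8 * (dft8 * diag8 e) = (idft8 * dft8) * diag8 e"
    by (rule assoc_mult_mat[symmetric], auto)
  also have "\<dots> = diag8 e" unfolding idft8_dft8 by simp
  also have "X * (diag8 e * idft8) = (X * diag8 e) * idft8"
    by (rule assoc_mult_mat[symmetric, OF X], auto)
  also have "X * diag8 e = dft8 * (diag8 d * diag8 e)" unfolding X_def
    by (rule assoc_mult_mat, auto)
  finally show ?thesis .
qed


lemma circ8_normal: "circ8 r mu z1 z2 z3 * transpose_mat (circ8 r mu z1 z2 z3) = transpose_mat (circ8 r mu z1 z2 z3) * circ8 r mu z1 z2 z3"
proof (rule of_real_hom.mat_hom_inj)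
  let ?C = "circ8 r mu z1 z2 z3"
  have "map_mat complex_of_real (?C * transpose_mat ?C) = map_mat complex_of_real ?C * map_mat complex_of_real (transpose_mat ?C)"
    by (rule of_real_hom.mat_hom_mult, auto)
  also have "\<dots> = dft8 * (diag8 (circ8_eig r mu z1 z2 z3) * diag8 (\<lambda>k. cnj (circ8_eig r mu z1 z2 z3 k))) * idft8"
    unfolding circ8_dft transpose_circ8_dft dft8_diag8_mult ..
  also have "\<dots> = dft8 * (diag8 (\<lambda>k. cnj (circ8_eig r mu z1 z2 z3 k)) * diag8 (circ8_eig r mu z1 z2 z3)) * idft8"
    by (simp add: diag8_commute)
  also have "\<dots> = map_mat complex_of_real (transpose_mat ?C) * map_mat complex_of_real ?C"
    unfolding circ8_dft transpose_circ8_dft dft8_diag8_mult ..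
  also have "\<dots> = map_mat complex_of_real (transpose_mat ?C * ?C)"
    by (rule of_real_hom.mat_hom_mult[symmetric], auto)
  finally show "map_mat complex_of_real (?C * transpose_mat ?C) = map_mat complex_of_real (transpose_mat ?C * ?C)" .
qed

lemma has_eigenvalues_circ8:
  "has_eigenvalues (circ8 r mu z1 z2 z3) (map (circ8_eig r mu z1 z2 z3) [0..<8])"
proof -
  have sim: "similar_mat (map_mat complex_of_real (circ8 r mu z1 z2 z3)) (diag8 (circ8_eig r mu z1 z2 z3))"
    by (rule similar_matI[where n = 8 and P = dft8 and Q = idft8]) (auto simp: dft8_idft8 idft8_dft8 circ8_dft)
  have "char_poly (diag8 (circ8_eig r mu z1 z2 z3)) = (\<Prod>a\<leftarrow>diag_mat (diag8 (circ8_eig r mu z1 z2 z3)). [:- a, 1:])"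
    by (rule char_poly_upper_triangular) (auto simp: upper_triangular_def diag8_def)
  moreover have "diag_mat (diag8 (circ8_eig r mu z1 z2 z3)) = map (circ8_eig r mu z1 z2 z3) [0..<8]"
    by (auto simp: diag_mat_def diag8_def)
  ultimately show ?thesis
    by (simp add: has_eigenvalues_def char_poly_similar[OF sim])
qed

definition circ8_perm :: "nat \<Rightarrow> nat" where "circ8_perm i = (if i < 4 then i else 11 - i)"

lemma circ8_perm_less: "i < 8 \<Longrightarrow> circ8_perm i < 8"
  by (auto simp: circ8_perm_def)

lemma circ8_perm_bij: "bij_betw circ8_perm {..<8} {..<8}"
  by (rule bij_betw_byWitness[where f' = circ8_perm]) (auto simp: circ8_perm_def)

text \<open>Reversing the index order of the permuted circulant shifts every difference of
  indices by a multiple of 8, to which the circulant is blind.\<close>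

lemma circ8_perm_rev: "p < 8 \<Longrightarrow> int (circ8_perm (7 - p)) = int (circ8_perm p) + 8 * (if p < 4 then 1 else 0) - 4"
  by (auto simp: circ8_perm_def)

interpretation circ8_perm: index_perm 8 circ8_perm by unfold_locales (rule circ8_perm_bij)

definition circ8_centro :: "real \<Rightarrow> real \<Rightarrow> complex \<Rightarrow> complex \<Rightarrow> complex \<Rightarrow> real mat" where
  "circ8_centro r mu z1 z2 z3 = permute_mat circ8_perm (circ8 r mu z1 z2 z3)"

lemma circ8_centro_carrier[simp]: "circ8_centro r mu z1 z2 z3 \<in> carrier_mat 8 8"
  using permute_mat_carrier[of circ8_perm "circ8 r mu z1 z2 z3"] by (simp add: circ8_centro_def)

lemma circ8_mult_ones: "circ8 r mu z1 z2 z3 *\<^sub>v ones_vec 8 = r \<cdot>\<^sub>v ones_vec 8"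
proof (rule eq_vecI)
  fix i assume "i < dim_vec (r \<cdot>\<^sub>v ones_vec 8)"
  then have i: "i < 8" by (simp add: ones_vec_def)
  have "(circ8 r mu z1 z2 z3 *\<^sub>v ones_vec 8) $ i = (\<Sum>j<8. circ8_entry r mu z1 z2 z3 (int i - int j))"
    using i by (simp add: scalar_prod_def ones_vec_def circ8_def sum_atLeast0_8)
  then show "(circ8 r mu z1 z2 z3 *\<^sub>v ones_vec 8) $ i = (r \<cdot>\<^sub>v ones_vec 8) $ i"
    using i by (simp add: circ8_row_sum ones_vec_def)
qed (simp add: ones_vec_def)

lemma transpose_circ8_mult_ones: "transpose_mat (circ8 r mu z1 z2 z3) *\<^sub>v ones_vec 8 = r \<cdot>\<^sub>v ones_vec 8"
proof (rule eq_vecI)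
  fix i assume "i < dim_vec (r \<cdot>\<^sub>v ones_vec 8)"
  then have i: "i < 8" by (simp add: ones_vec_def)
  have "(transpose_mat (circ8 r mu z1 z2 z3) *\<^sub>v ones_vec 8) $ i = (\<Sum>j<8. circ8_entry r mu z1 z2 z3 (int j - int i))"
    using i by (simp add: scalar_prod_def ones_vec_def circ8_def sum_atLeast0_8)
  then show "(transpose_mat (circ8 r mu z1 z2 z3) *\<^sub>v ones_vec 8) $ i = (r \<cdot>\<^sub>v ones_vec 8) $ i"
    using i by (simp add: circ8_col_sum ones_vec_def)
qed (simp add: ones_vec_def)

lemma circ8_centro_rev:
  assumes i: "i < 8" and j: "j < 8"
  shows "circ8_centro r mu z1 z2 z3 $$ (7 - i, 7 - j) = circ8_centro r mu z1 z2 z3 $$ (i, j)"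
proof -
  let ?f = circ8_perm and ?c = "circ8_entry r mu z1 z2 z3"
  have "circ8_centro r mu z1 z2 z3 $$ (7 - i, 7 - j) = ?c (int (?f (7 - i)) - int (?f (7 - j)))"
    using i j circ8_perm_less[of "7 - i"] circ8_perm_less[of "7 - j"] by (simp add: circ8_centro_def circ8_def)
  also have "int (?f (7 - i)) - int (?f (7 - j))
      = int (?f i) - int (?f j) + 8 * ((if i < 4 then 1 else 0) - (if j < 4 then 1 else 0))"
    using circ8_perm_rev[OF i] circ8_perm_rev[OF j] by simp
  also have "?c \<dots> = ?c (int (?f i) - int (?f j))"
    by (rule circ8_entry_period)
  also have "\<dots> = circ8_centro r mu z1 z2 z3 $$ (i, j)"
    using i j circ8_perm_less[of i] circ8_perm_less[of j] by (simp add: circ8_centro_def circ8_def)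
  finally show ?thesis .
qed

lemma ncs_perron_pair_circ8_centro:
  assumes r: "r \<ge> \<bar>mu\<bar> + 2 * (cmod z1 + cmod z2 + cmod z3)"
  shows "ncs_perron_pair (circ8_centro r mu z1 z2 z3) (2 * 4) r (ones_vec 8)"
  unfolding ncs_perron_pair_def
proof (intro conjI allI impI)
  let ?C = "circ8 r mu z1 z2 z3"
  have C: "?C \<in> carrier_mat 8 8" by simp
  have ones: "permute_vec circ8_perm (ones_vec 8) = ones_vec 8"
    by (auto simp: ones_vec_def circ8_perm_less intro!: eq_vecI)
  show "circ8_centro r mu z1 z2 z3 *\<^sub>v ones_vec 8 = r \<cdot>\<^sub>v ones_vec 8"
    using circ8_perm.permute_mat_mult_vec[OF C ones_vec_carrier] circ8_perm.permute_vec_smult[OF ones_vec_carrier]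
    by (simp add: circ8_centro_def circ8_mult_ones ones)
  show "transpose_mat (circ8_centro r mu z1 z2 z3) *\<^sub>v ones_vec 8 = r \<cdot>\<^sub>v ones_vec 8"
    using circ8_perm.permute_mat_mult_vec[of "transpose_mat ?C", OF _ ones_vec_carrier]
      circ8_perm.permute_vec_smult[OF ones_vec_carrier]
    by (simp add: circ8_centro_def circ8_perm.transpose_permute_mat transpose_circ8_mult_ones ones)
  show "circ8_centro r mu z1 z2 z3 * transpose_mat (circ8_centro r mu z1 z2 z3)
      = transpose_mat (circ8_centro r mu z1 z2 z3) * circ8_centro r mu z1 z2 z3"
    unfolding circ8_centro_def by (rule circ8_perm.permute_mat_normal[OF C circ8_normal])
  show "\<exists>i<2 * 4. 0 < ones_vec 8 $ i" by (rule exI[of _ 0]) (simp add: ones_vec_def)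
  fix i :: nat assume i: "i < 2 * 4"
  then show "0 \<le> ones_vec 8 $ i" "ones_vec 8 $ (2 * 4 - 1 - i) = ones_vec 8 $ i"
    by (simp_all add: ones_vec_def)
  fix j :: nat assume j: "j < 2 * 4"
  show "0 \<le> circ8_centro r mu z1 z2 z3 $$ (i, j)"
    using i j circ8_perm_less[of i] circ8_perm_less[of j]
    by (simp add: circ8_centro_def circ8_def circ8_entry_nonneg[OF r])
  show "circ8_centro r mu z1 z2 z3 $$ (2 * 4 - 1 - i, 2 * 4 - 1 - j) = circ8_centro r mu z1 z2 z3 $$ (i, j)"
    using circ8_centro_rev[of i j] i j by simp
qed (simp_all add: ones_vec_def)

lemma has_eigenvalues_circ8_centro:
  "has_eigenvalues (circ8_centro r mu z1 z2 z3) (map (circ8_eig r mu z1 z2 z3) [0..<8])"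
  using has_eigenvalues_circ8 circ8_perm.has_eigenvalues_permute_mat[OF circ8_carrier]
  by (simp add: circ8_centro_def)

lemmas mset_literal_simps = mset.simps mset_append add_mset_commute
  union_mset_add_mset_left union_mset_add_mset_right add_0 add_0_right

lemma circ8_eig_list:
  "map (circ8_eig r mu z1 z2 z3) [0..<8] = [of_real r, z1, z2, z3, of_real mu, cnj z3, cnj z2, cnj z1]"
  by (simp add: circ8_eig_def upt_rec)

lemma ncs_realization_circ8:
  assumes "r \<ge> \<bar>mu\<bar> + 2 * (cmod z1 + cmod z2 + cmod z3)"
  shows "\<exists>C u. ncs_perron_pair C (2 * 4) r u \<and>
    has_eigenvalues C (of_real r # [z1, z2, z3, of_real mu, cnj z3, cnj z2, cnj z1])"
  using ncs_perron_pair_circ8_centro[OF assms] has_eigenvalues_circ8_centro[of r mu z1 z2 z3]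
  by (auto simp: circ8_eig_list)

lemma negative_of_decreasing:
  fixes lam :: "nat \<Rightarrow> real"
  assumes "lam 1 < 0" and "\<And>j. 1 \<le> j \<Longrightarrow> j < n \<Longrightarrow> lam (Suc j) \<le> lam j"
  shows "1 \<le> j \<Longrightarrow> j \<le> n \<Longrightarrow> lam j < 0"
proof (induction j)
  case (Suc j)
  show ?case
  proof (cases "j = 0")
    case False
    then have "lam j < 0" and "lam (Suc j) \<le> lam j"
      using Suc assms(2)[of j] by simp_all
    then show ?thesis by simp
  qed (use assms(1) in simp)
qed simp

text \<open>For n \<ge> 2 the eigenvalues lam 3, ..., lam n are realised Suleimanova-style with Perron
  value lam 0 + lam 1 + lam 2 - 2 S, where S = |z1| + |z2| + |z3|; the circulant carries lam 1 and
  the z_j with its least admissible Perron value 2 S - lam 1; gluing the two Perron values yields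
  lam 0 and lam 2.\<close>

lemma ncs_realization:
  fixes lam :: "nat \<Rightarrow> real"
  assumes n: "n \<ge> 1" and lam1: "lam 1 < 0" and dec: "\<And>j. 1 \<le> j \<Longrightarrow> j < n \<Longrightarrow> lam (Suc j) \<le> lam j"
    and sum: "2 * (cmod z1 + cmod z2 + cmod z3) \<le> lam 0 + (\<Sum>j=1..n. lam j)"
  shows "\<exists>Q u. ncs_perron_pair Q (n + 7) (lam 0) u \<and>
    has_eigenvalues Q (map (\<lambda>j. of_real (lam j)) [0..<n+1] @ [z1, z2, z3, cnj z1, cnj z2, cnj z3])"
proof (cases "n = 1")
  case True
  then have "lam 0 \<ge> \<bar>lam 1\<bar> + 2 * (cmod z1 + cmod z2 + cmod z3)" using sum lam1 by simp
  then obtain C u where C: "ncs_perron_pair C (2 * 4) (lam 0) u"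
    and eig: "has_eigenvalues C (of_real (lam 0) # [z1, z2, z3, of_real (lam 1), cnj z3, cnj z2, cnj z1])"
    using ncs_realization_circ8 by blast
  have "has_eigenvalues C ([of_real (lam 0), of_real (lam 1)] @ [z1, z2, z3, cnj z1, cnj z2, cnj z3])"
    using eig by (rule has_eigenvalues_mset[THEN iffD1, rotated]) (simp only: mset_literal_simps)
  then show ?thesis using C True by (auto simp: numeral_2_eq_2)
next
  case False
  then have n2: "n \<ge> 2" using n by simp
  define S where "S = cmod z1 + cmod z2 + cmod z3"
  define \<nu>s where "\<nu>s = map lam [3..<n+1]"
  have neg: "lam j < 0" if "1 \<le> j" "j \<le> n" for j
    using negative_of_decreasing[OF lam1 dec that] .
  have "(\<Sum>j=1..n. lam j) = (\<Sum>j\<in>{1..<n+1}. lam j)" by (rule sum.cong) auto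
  also have "\<dots> = lam 1 + (\<Sum>j\<in>{2..<n+1}. lam j)"
    using n2 sum.atLeast_Suc_lessThan[where m = 1 and n = "n + 1" and g = lam] by (simp add: numeral_2_eq_2)
  also have "(\<Sum>j\<in>{2..<n+1}. lam j) = lam 2 + (\<Sum>j\<in>{3..<n+1}. lam j)"
    using n2 sum.atLeast_Suc_lessThan[where m = 2 and n = "n + 1" and g = lam] by (simp add: numeral_3_eq_3)
  also have "(\<Sum>j\<in>{3..<n+1}. lam j) = sum_list \<nu>s"
    unfolding \<nu>s_def using sum_set_upt_conv_sum_list_nat[of lam 3 "n + 1"] by (simp only: set_upt)
  finally have split: "(\<Sum>j=1..n. lam j) = lam 1 + lam 2 + sum_list \<nu>s"
    by (simp only: add.assoc)
  have \<nu>s_neg: "\<forall>\<nu>\<in>set \<nu>s. \<nu> < 0" using neg by (auto simp: \<nu>s_def)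
  then have "sum_list \<nu>s \<le> 0" by (induction \<nu>s) auto
  moreover have "lam 2 < 0" using neg n2 by simp
  moreover have "S \<ge> 0" and "2 * S \<le> lam 0 + (\<Sum>j=1..n. lam j)" using sum by (simp_all add: S_def)
  ultimately have \<alpha>: "0 \<le> (lam 0 + lam 1 + lam 2 - 2 * S) + sum_list \<nu>s"
    "lam 0 + lam 1 + lam 2 - 2 * S < lam 0" "2 * S - lam 1 \<le> lam 0"
    using split lam1 by linarith+
  obtain A u where A: "ncs_perron_pair A (length \<nu>s + 1) (lam 0 + lam 1 + lam 2 - 2 * S) u"
    and eig_A: "has_eigenvalues A (map of_real ((lam 0 + lam 1 + lam 2 - 2 * S) # \<nu>s))"
    using suleimanova_ncs[OF \<nu>s_neg \<alpha>(1)] by blast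
  have eig_A': "has_eigenvalues A (of_real (lam 0 + lam 1 + lam 2 - 2 * S) # map of_real \<nu>s)"
    using eig_A by simp
  have "\<bar>lam 1\<bar> + 2 * (cmod z1 + cmod z2 + cmod z3) \<le> 2 * S - lam 1"
    using lam1 by (simp add: S_def)
  then obtain C w where C: "ncs_perron_pair C (2 * 4) (2 * S - lam 1) w"
    and eig_C: "has_eigenvalues C (of_real (2 * S - lam 1) # [z1, z2, z3, of_real (lam 1), cnj z3, cnj z2, cnj z1])"
    using ncs_realization_circ8 by blast
  obtain Q v where Q: "ncs_perron_pair Q (2 * 4 + (length \<nu>s + 1)) (lam 0) v"
    and eig_Q: "has_eigenvalues Q (of_real (lam 0) # of_real (lam 0 + lam 1 + lam 2 - 2 * S + (2 * S - lam 1) - lam 0)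
      # [z1, z2, z3, of_real (lam 1), cnj z3, cnj z2, cnj z1] @ map of_real \<nu>s)"
    using ncs_merge[OF C A eig_C eig_A' \<alpha>(2,3)] by blast
  have lam2: "lam 0 + lam 1 + lam 2 - 2 * S + (2 * S - lam 1) - lam 0 = lam 2" by simp
  have eig: "has_eigenvalues Q (of_real (lam 0) # of_real (lam 1) # of_real (lam 2) # map of_real \<nu>s
      @ [z1, z2, z3, cnj z1, cnj z2, cnj z3])"
    using eig_Q[unfolded lam2] by (rule has_eigenvalues_mset[THEN iffD1, rotated]) (simp only: mset_literal_simps)
  have list: "map (\<lambda>j. of_real (lam j)) [0..<n+1] = of_real (lam 0) # of_real (lam 1) # of_real (lam 2) # map of_real \<nu>s"
    using n2 by (simp add: \<nu>s_def upt_conv_Cons comp_def eval_nat_numeral del: upt_Suc)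
  have "has_eigenvalues Q (map (\<lambda>j. of_real (lam j)) [0..<n+1] @ [z1, z2, z3, cnj z1, cnj z2, cnj z3])"
    using eig by (simp only: list append_Cons)
  moreover have "2 * 4 + (length \<nu>s + 1) = n + 7" using n2 by (simp add: \<nu>s_def) arith
  ultimately show ?thesis using Q by (metis (no_types))
qed

theorem theorem3p13:
  fixes n :: nat and lam :: "nat \<Rightarrow> real" and z1 z2 z3 :: complex
  assumes "n \<ge> 1"
    and "lam 0 \<ge> 0" and "0 > lam 1"
    and "\<And>j. 1 \<le> j \<Longrightarrow> j < n \<Longrightarrow> lam j \<ge> lam (Suc j)"
    and "Im z1 > 0" and "Im z2 > 0" and "Im z3 > 0"
    and "lam 0 + (\<Sum>j=1..n. lam j) - 2 * (cmod z1 + cmod z2 + cmod z3) \<ge> 0"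
  shows "\<exists>Q :: real mat. Q \<in> carrier_mat (n + 7) (n + 7) \<and> normal_mat Q \<and>
           centrosymmetric Q \<and> nonneg_mat Q \<and>
           has_eigenvalues Q (map (\<lambda>j. complex_of_real (lam j)) [0..<n+1]
                               @ [z1, z2, z3, cnj z1, cnj z2, cnj z3])"
proof -
  have "2 * (cmod z1 + cmod z2 + cmod z3) \<le> lam 0 + (\<Sum>j=1..n. lam j)" using assms(8) by simp
  then obtain Q u where "ncs_perron_pair Q (n + 7) (lam 0) u"
    and "has_eigenvalues Q (map (\<lambda>j. complex_of_real (lam j)) [0..<n+1] @ [z1, z2, z3, cnj z1, cnj z2, cnj z3])"
    using ncs_realization[OF assms(1,3,4)] by blast
  then show ?thesis using ncs_perron_pairD by blast
qed

end
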